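(* Let $n\ge3$, $0\le\delta<\frac1{n-2}$, and let $u$ be twice differentiable at a point $P$ with $A_u(P)\in\overline\Gamma_\delta$. Let $v=e^{\beta u}$ with $\beta=\frac{1+(2-n)\delta}{2(1+\delta)}$. Then at $P$, $$\nabla^2v+\beta\,v\,A_g\in\overline\Gamma_\delta,$$ where $A_g$ is the Schouten tensor of $g$. In particular, if $g$ is the flat metric on (an open subset of) $\mathbb{R}^n$ and $A_u\in\overline\Gamma_\delta$ everywhere, then $v$ is $\delta$-convex.
   Context: $(M^n,g)$ Riemannian manifold; Schouten tensor $A_g=\frac1{n-2}(Ric-\frac{R}{2(n-1)}g)$; $A_u=A_g+\nabla^2u+du\otimes du-\frac12|\nabla u|^2g$ (Schouten tensor of $e^{-2u}g$). For a symmetric 2-tensor $T$, "$T\in\overline\Gamma_\delta$" means the $n$-tuple of eigenvalues of $T$ with respect to $g$ lies in $\overline\Gamma_\delta$, the closure of $\Gamma_\delta=\{\lambda\in\mathbb{R}^n:\lambda_i>-\delta\sum_j\lambda_j\ \forall i\}$. A $C^2$ function $W$ on an open set of $\mathbb{R}^n$ is $\delta$-convex if $D^2W\in\overline\Gamma_\delta$ at each point. *)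

theory Defs
  imports "HOL-Analysis.Analysis"
begin

text \<open>Local-coordinate (chart) setting: a Riemannian metric on an open set U of R^n is
  a smooth field of symmetric positive definite matrices g x.  Indices range over
  the finite type 'n, n = CARD('n).\<close>

definition pd :: "'n::finite \<Rightarrow> (real^'n \<Rightarrow> real) \<Rightarrow> real^'n \<Rightarrow> real" where
  "pd i f x = frechet_derivative f (at x) (axis i 1)"

fun Ck_on :: "nat \<Rightarrow> (real^'n::finite \<Rightarrow> real) \<Rightarrow> (real^'n) set \<Rightarrow> bool" where
  "Ck_on 0 f U = continuous_on U f"
| "Ck_on (Suc k) f U = ((\<forall>x\<in>U. f differentiable (at x)) \<and> (\<forall>i. Ck_on k (pd i f) U))"

definition smooth_on :: "(real^'n::finite \<Rightarrow> real) \<Rightarrow> (real^'n) set \<Rightarrow> bool" where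
  "smooth_on f U = (\<forall>k. Ck_on k f U)"

definition riemannian_metric_on :: "(real^'n::finite \<Rightarrow> real^'n^'n) \<Rightarrow> (real^'n) set \<Rightarrow> bool" where
  "riemannian_metric_on g U =
     (open U \<and> (\<forall>x\<in>U. transpose (g x) = g x \<and> (\<forall>\<xi>. \<xi> \<noteq> 0 \<longrightarrow> \<xi> \<bullet> (g x *v \<xi>) > 0))
      \<and> (\<forall>i j. smooth_on (\<lambda>y. g y $ i $ j) U))"

definition twice_diff_at :: "(real^'n::finite \<Rightarrow> real) \<Rightarrow> real^'n \<Rightarrow> bool" where
  "twice_diff_at u P = ((\<exists>e>0. \<forall>x\<in>ball P e. u differentiable (at x))
                        \<and> (\<forall>i. pd i u differentiable (at P)))"

definition ginv :: "(real^'n::finite \<Rightarrow> real^'n^'n) \<Rightarrow> real^'n \<Rightarrow> 'n \<Rightarrow> 'n \<Rightarrow> real" where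
  "ginv g x i j = matrix_inv (g x) $ i $ j"

definition christoffel :: "(real^'n::finite \<Rightarrow> real^'n^'n) \<Rightarrow> 'n \<Rightarrow> 'n \<Rightarrow> 'n \<Rightarrow> real^'n \<Rightarrow> real" where
  "christoffel g k i j x = 1/2 * (\<Sum>l\<in>UNIV. ginv g x k l *
      (pd i (\<lambda>y. g y $ j $ l) x + pd j (\<lambda>y. g y $ i $ l) x - pd l (\<lambda>y. g y $ i $ j) x))"

definition ricci :: "(real^'n::finite \<Rightarrow> real^'n^'n) \<Rightarrow> real^'n \<Rightarrow> real^'n^'n" where
  "ricci g x = (\<chi> j k. \<Sum>i\<in>UNIV. pd i (christoffel g i j k) x - pd k (christoffel g i i j) x
      + (\<Sum>p\<in>UNIV. christoffel g i i p x * christoffel g p j k x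
                   - christoffel g i k p x * christoffel g p i j x))"

definition scalar_curv :: "(real^'n::finite \<Rightarrow> real^'n^'n) \<Rightarrow> real^'n \<Rightarrow> real" where
  "scalar_curv g x = (\<Sum>j\<in>UNIV. \<Sum>k\<in>UNIV. ginv g x j k * ricci g x $ j $ k)"

definition schouten :: "(real^'n::finite \<Rightarrow> real^'n^'n) \<Rightarrow> real^'n \<Rightarrow> real^'n^'n" where
  "schouten g x = (1 / (real CARD('n) - 2)) *\<^sub>R
      (ricci g x - (scalar_curv g x / (2 * (real CARD('n) - 1))) *\<^sub>R g x)"

definition cov_hess :: "(real^'n::finite \<Rightarrow> real^'n^'n) \<Rightarrow> (real^'n \<Rightarrow> real) \<Rightarrow> real^'n \<Rightarrow> real^'n^'n" where
  "cov_hess g u x = (\<chi> i j. pd i (pd j u) x - (\<Sum>k\<in>UNIV. christoffel g k i j x * pd k u x))"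

definition du_du :: "(real^'n::finite \<Rightarrow> real) \<Rightarrow> real^'n \<Rightarrow> real^'n^'n" where
  "du_du u x = (\<chi> i j. pd i u x * pd j u x)"

definition grad_sq :: "(real^'n::finite \<Rightarrow> real^'n^'n) \<Rightarrow> (real^'n \<Rightarrow> real) \<Rightarrow> real^'n \<Rightarrow> real" where
  "grad_sq g u x = (\<Sum>i\<in>UNIV. \<Sum>j\<in>UNIV. ginv g x i j * pd i u x * pd j u x)"

definition A_u :: "(real^'n::finite \<Rightarrow> real^'n^'n) \<Rightarrow> (real^'n \<Rightarrow> real) \<Rightarrow> real^'n \<Rightarrow> real^'n^'n" where
  "A_u g u x = schouten g x + cov_hess g u x + du_du u x - (grad_sq g u x / 2) *\<^sub>R g x"

definition Gamma_cone :: "real \<Rightarrow> (real^'n::finite) set" where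
  "Gamma_cone \<delta> = {lam. \<forall>i. lam $ i > - \<delta> * (\<Sum>j\<in>UNIV. lam $ j)}"

text \<open>lam is the n-tuple of eigenvalues (with multiplicity) of the matrix M.\<close>
definition eigen_tuple :: "real^'n^'n \<Rightarrow> real^'n::finite \<Rightarrow> bool" where
  "eigen_tuple M lam = (\<forall>t. det (t *\<^sub>R mat 1 - M) = (\<Prod>i\<in>UNIV. t - lam $ i))"

definition in_Gamma_bar :: "real \<Rightarrow> real^'n^'n \<Rightarrow> real^'n^'n \<Rightarrow> bool" where
  "in_Gamma_bar \<delta> G T = (\<exists>lam::real^'n::finite. eigen_tuple (matrix_inv G ** T) lam
                                  \<and> lam \<in> closure (Gamma_cone \<delta>))"

definition hessian :: "(real^'n::finite \<Rightarrow> real) \<Rightarrow> real^'n \<Rightarrow> real^'n^'n" where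
  "hessian W x = (\<chi> i j. pd i (pd j W) x)"

definition delta_convex :: "real \<Rightarrow> (real^'n::finite \<Rightarrow> real) \<Rightarrow> (real^'n) set \<Rightarrow> bool" where
  "delta_convex \<delta> W U = (Ck_on 2 W U \<and>
     (\<forall>x\<in>U. \<exists>lam. eigen_tuple (hessian W x) lam \<and> lam \<in> closure (Gamma_cone \<delta>)))"

end

theory Submission imports Defs "HOL-Computational_Algebra.Polynomial" begin

(* Put w = du and v = exp (beta u) at P. Since nabla^2 v = beta v (nabla^2 u + beta du (x) du), the
   definition of A_u gives
     nabla^2 v + beta v A_g = beta v (A_u - (1 - beta) w (x) w + |w|^2/2 g).
   For a symmetric T, T lies in the closed cone iff T(x,x) + delta tr_g(T) |x|^2 >= 0 for all x
   (diagonalise T and g simultaneously).  For the right-hand side the trace terms of w (x) w and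
   of g cancel exactly, because (1 - beta)(1 + delta) = (1 + n delta)/2, and what is left,
   (1 - beta)(|w|^2 |x|^2 - <w,x>^2), is nonnegative by Cauchy-Schwarz.  The diagonalisation needs
   A_u to be symmetric, i.e. Schwarz's theorem for u and the symmetry of the coordinate Ricci
   tensor.  In the flat case A_g and the Christoffel symbols vanish and nabla^2 v is the Hessian. *)

section \<open>Simultaneous diagonalisation of a symmetric pencil\<close>

definition bform :: "real^'n::finite^'n \<Rightarrow> real^'n \<Rightarrow> real^'n \<Rightarrow> real" where
  "bform G x y = x \<bullet> (G *v y)"

definition posdef :: "real^'n::finite^'n \<Rightarrow> bool" where
  "posdef G \<longleftrightarrow> transpose G = G \<and> (\<forall>\<xi>. \<xi> \<noteq> 0 \<longrightarrow> \<xi> \<bullet> (G *v \<xi>) > 0)"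

definition diag_matrix :: "real^'n::finite \<Rightarrow> real^'n^'n" where
  "diag_matrix \<mu> = (\<chi> i j. if i = j then \<mu> $ i else 0)"

lemma transpose_eq_imp_entry_sym: "transpose M = M \<Longrightarrow> M $ i $ j = M $ j $ i"
  by (metis transpose_def vec_lambda_beta)

lemma bform_commute: "transpose G = G \<Longrightarrow> bform G x y = bform G y x"
  unfolding bform_def by (metis dot_lmul_matrix inner_commute vector_transpose_matrix)

lemma bform_add_left [simp]: "bform G (x + y) z = bform G x z + bform G y z"
  and bform_add_right [simp]: "bform G z (x + y) = bform G z x + bform G z y"
  and bform_diff_left [simp]: "bform G (x - y) z = bform G x z - bform G y z"
  and bform_diff_right [simp]: "bform G z (x - y) = bform G z x - bform G z y"
  and bform_scaleR_left [simp]: "bform G (c *\<^sub>R x) z = c * bform G x z"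
  and bform_scaleR_right [simp]: "bform G z (c *\<^sub>R x) = c * bform G z x"
  and bform_zero [simp]: "bform G 0 z = 0" "bform G z 0 = 0"
  by (simp_all add: bform_def algebra_simps)

lemma bform_matrix_add [simp]: "bform (X + Y) x y = bform X x y + bform Y x y"
  and bform_matrix_diff [simp]: "bform (X - Y) x y = bform X x y - bform Y x y"
  and bform_matrix_scaleR [simp]: "bform (c *\<^sub>R X) x y = c * bform X x y"
  by (simp_all add: bform_def matrix_vector_mult_add_rdistrib matrix_vector_mult_diff_rdistrib
      inner_add_right inner_diff_right flip: scaleR_matrix_vector_assoc)

lemma posdef_bform_pos: "posdef G \<Longrightarrow> x \<noteq> 0 \<Longrightarrow> bform G x x > 0"
  by (simp add: posdef_def bform_def)

lemma posdef_bform_eq_0_iff: "posdef G \<Longrightarrow> bform G x x = 0 \<longleftrightarrow> x = 0"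
  using posdef_bform_pos by force

lemma linear_coeff_zero_if_quadratic_nonpos:
  fixes a b :: real
  assumes "\<And>t. 2 * t * b + t\<^sup>2 * a \<le> 0"
  shows "b = 0"
proof -
  define C where "C = \<bar>a\<bar> + 1"
  have C: "C > 0" "2 * C + a > 0" unfolding C_def by auto
  have "(2 * (b/C) * b + (b/C)\<^sup>2 * a) * C\<^sup>2 \<le> 0"
    using assms[of "b/C"] by (simp add: mult_nonpos_nonneg)
  also have "(2 * (b/C) * b + (b/C)\<^sup>2 * a) * C\<^sup>2 = b\<^sup>2 * (2 * C + a)"
    using C by (simp add: field_simps power2_eq_square)
  finally have "b\<^sup>2 \<le> 0" using C by (simp add: mult_le_0_iff)
  then show ?thesis by simp
qed

lemma rayleigh_quotient_attains_max:
  fixes G A :: "real^'n::finite^'n"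
  assumes G: "posdef G" and V: "subspace V" "V \<noteq> {0}"
  obtains x0 \<mu> where "x0 \<in> V" "bform G x0 x0 = 1" "bform A x0 x0 = \<mu>"
    "\<And>z. z \<in> V \<Longrightarrow> bform A z z \<le> \<mu> * bform G z z"
proof -
  define K where "K = V \<inter> sphere 0 1"
  define r where "r x = bform A x x / bform G x x" for x
  have K: "compact K" "K \<noteq> {}"
  proof -
    show "compact K" unfolding K_def using closed_subspace[OF V(1)] by (simp add: closed_Int_compact)
    obtain v where "v \<in> V" "v \<noteq> 0" using V subspace_0 by blast
    then have "v /\<^sub>R norm v \<in> K" using V(1) by (simp add: K_def subspace_scale)
    then show "K \<noteq> {}" by blast
  qed
  have Kpos: "bform G x x > 0" if "x \<in> K" for x
  proof -
    have "x \<noteq> 0" using that by (auto simp: K_def)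
    then show ?thesis by (rule posdef_bform_pos[OF G])
  qed
  have quad_cont: "continuous_on K (\<lambda>x. bform M x x)" for M :: "real^'n^'n"
    unfolding bform_def by (intro continuous_intros linear_continuous_on matrix_vector_mul_bounded_linear)
  have "continuous_on K r"
    unfolding r_def using Kpos by (intro continuous_on_divide quad_cont) force
  then obtain x1 where x1: "x1 \<in> K" "\<And>y. y \<in> K \<Longrightarrow> r y \<le> r x1"
    using continuous_attains_sup[OF K] by blast
  define \<mu> where "\<mu> = r x1"
  have max: "bform A z z \<le> \<mu> * bform G z z" if "z \<in> V" for z
  proof (cases "z = 0")
    case False
    then have "z /\<^sub>R norm z \<in> K" using that V(1) by (simp add: K_def subspace_scale)
    moreover have "r (z /\<^sub>R norm z) = r z"
      using False by (simp add: r_def power2_eq_square)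
    ultimately have "r z \<le> \<mu>" using x1 \<mu>_def by metis
    then show ?thesis using posdef_bform_pos[OF G False] by (simp add: r_def pos_divide_le_eq)
  qed simp
  define x0 where "x0 = (1 / sqrt (bform G x1 x1)) *\<^sub>R x1"
  have "x0 \<in> V" using x1(1) V(1) by (simp add: K_def x0_def subspace_scale)
  moreover have "bform G x0 x0 = 1" using Kpos[OF x1(1)] by (simp add: x0_def)
  moreover have "bform A x0 x0 = \<mu>"
    using Kpos[OF x1(1)] by (simp add: x0_def \<mu>_def r_def)
  ultimately show ?thesis using max that by blast
qed

text \<open>Expanding the maximality along the line \<open>x0 + t y\<close> gives a quadratic in \<open>t\<close> that is
  nowhere positive, so its linear coefficient vanishes.\<close>

lemma rayleigh_max_stationary:
  assumes A: "transpose A = A" and G: "transpose G = G" and V: "subspace V"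
    and x0: "x0 \<in> V" "bform A x0 x0 = \<mu> * bform G x0 x0"
    and max: "\<And>z. z \<in> V \<Longrightarrow> bform A z z \<le> \<mu> * bform G z z" and y: "y \<in> V"
  shows "bform A y x0 = \<mu> * bform G y x0"
proof -
  have "2 * t * (bform A y x0 - \<mu> * bform G y x0) + t\<^sup>2 * (bform A y y - \<mu> * bform G y y) \<le> 0" for t
  proof -
    have "x0 + t *\<^sub>R y \<in> V" using x0 y V by (simp add: subspace_add subspace_scale)
    from max[OF this] show ?thesis
      using x0(2) bform_commute[OF A, of x0 y] bform_commute[OF G, of x0 y]
      by (simp add: power2_eq_square algebra_simps)
  qed
  then show ?thesis using linear_coeff_zero_if_quadratic_nonpos by fastforce
qed

text \<open>The eigen-equation of \<open>b\<close> is only tested against vectors of \<open>V\<close>, so that it survives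
  passing to the \<open>G\<close>-orthogonal complement of an eigenvector inside \<open>V\<close>; for \<open>V = UNIV\<close> it says
  \<open>A b = \<mu> G b\<close>.\<close>

definition pencil_eigenbasis :: "real^'n::finite^'n \<Rightarrow> real^'n^'n \<Rightarrow> (real^'n) set \<Rightarrow> (real^'n) set \<Rightarrow> bool" where
  "pencil_eigenbasis G A V B \<longleftrightarrow> B \<subseteq> V \<and> span B = V \<and> pairwise (\<lambda>b c. bform G b c = 0) B
     \<and> (\<forall>b\<in>B. bform G b b = 1 \<and> (\<exists>\<mu>. \<forall>y\<in>V. bform A y b = \<mu> * bform G y b))"

lemma pencil_eigenbasis_insert:
  assumes A: "transpose A = A" and G: "transpose G = G" and V: "subspace V"
    and x0: "x0 \<in> V" "bform G x0 x0 = 1" and eig: "\<forall>y\<in>V. bform A y x0 = \<mu> * bform G y x0"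
    and B': "pencil_eigenbasis G A {y \<in> V. bform G y x0 = 0} B'"
  shows "pencil_eigenbasis G A V (insert x0 B')"
proof -
  define V' where "V' = {y \<in> V. bform G y x0 = 0}"
  have B'V': "B' \<subseteq> V'" "span B' = V'" "pairwise (\<lambda>b c. bform G b c = 0) B'"
    "\<forall>b\<in>B'. bform G b b = 1 \<and> (\<exists>\<mu>. \<forall>y\<in>V'. bform A y b = \<mu> * bform G y b)"
    using B' by (simp_all add: pencil_eigenbasis_def V'_def)
  have proj: "y - bform G y x0 *\<^sub>R x0 \<in> V'" if "y \<in> V" for y
    using that x0 V by (simp add: V'_def subspace_diff subspace_scale)
  have x0B': "bform G x0 b = 0" "bform A x0 b = 0" if "b \<in> B'" for b
    using that B'V'(1) eig bform_commute[OF G] bform_commute[OF A] by (auto simp: V'_def)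
  have sub: "insert x0 B' \<subseteq> V" using B'V'(1) x0 by (auto simp: V'_def)
  have "V \<subseteq> span (insert x0 B')"
  proof
    fix y assume "y \<in> V"
    then have "y - bform G y x0 *\<^sub>R x0 \<in> span (insert x0 B')"
      using proj B'V'(2) span_mono[of B' "insert x0 B'"] by auto
    then show "y \<in> span (insert x0 B')"
      by (metis diff_add_cancel span_add span_base span_scale insertI1)
  qed
  then have "span (insert x0 B') = V" using span_minimal[OF sub V] by blast
  moreover have "bform G b b = 1 \<and> (\<exists>\<nu>. \<forall>y\<in>V. bform A y b = \<nu> * bform G y b)" if b: "b \<in> B'" for b
  proof -
    from B'V'(4)[rule_format, OF b] obtain \<nu> where
      norm: "bform G b b = 1" and \<nu>: "\<And>y. y \<in> V' \<Longrightarrow> bform A y b = \<nu> * bform G y b"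
      by blast
    have "bform A y b = \<nu> * bform G y b" if "y \<in> V" for y
      using \<nu>[OF proj[OF that]] x0B'[OF b] by simp
    with norm show ?thesis by blast
  qed
  moreover have "pairwise (\<lambda>b c. bform G b c = 0) (insert x0 B')"
    using B'V'(3) x0B' bform_commute[OF G] by (auto simp: pairwise_insert)
  ultimately show ?thesis unfolding pencil_eigenbasis_def using sub x0(2) eig by blast
qed

lemma pencil_eigenbasis_exists:
  assumes G: "posdef G" and A: "transpose A = A"
  shows "subspace V \<Longrightarrow> \<exists>B. pencil_eigenbasis G A V B"
proof (induction "dim V" arbitrary: V rule: less_induct)
  case less
  show ?case
  proof (cases "V = {0}")
    case True
    then show ?thesis by (intro exI[of _ "{}"]) (auto simp: pencil_eigenbasis_def)
  next
    case False
    have Gs: "transpose G = G" using G by (simp add: posdef_def)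
    obtain x0 \<mu> where x0: "x0 \<in> V" "bform G x0 x0 = 1" "bform A x0 x0 = \<mu>"
      and max: "\<And>z. z \<in> V \<Longrightarrow> bform A z z \<le> \<mu> * bform G z z"
      using rayleigh_quotient_attains_max[OF G less.prems False] by metis
    have eig: "\<forall>y\<in>V. bform A y x0 = \<mu> * bform G y x0"
      using rayleigh_max_stationary[OF A Gs less.prems x0(1) _ max] x0 by simp
    define V' where "V' = {y \<in> V. bform G y x0 = 0}"
    have V': "subspace V'"
      unfolding V'_def subspace_def using less.prems by (auto simp: subspace_add subspace_scale subspace_0)
    have "V' \<subset> V" using x0 by (force simp: V'_def)
    then have "dim V' < dim V"
      using V' less.prems by (metis dim_psubset span_eq_iff)
    then obtain B' where "pencil_eigenbasis G A V' B'" using less.hyps[OF _ V'] by blast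
    then show ?thesis
      using pencil_eigenbasis_insert[OF A Gs less.prems x0(1,2) eig] unfolding V'_def by blast
  qed
qed

lemma matrix_inv_right: "invertible G \<Longrightarrow> G ** matrix_inv G = mat 1"
  and matrix_inv_left: "invertible G \<Longrightarrow> matrix_inv G ** G = mat 1"
  for G :: "real^'n::finite^'n"
  unfolding invertible_def matrix_inv_def by (metis (mono_tags, lifting) someI_ex)+

lemma matrix_inv_unique:
  fixes G X :: "real^'n::finite^'n"
  assumes "G ** X = mat 1"
  shows "matrix_inv G = X"
proof -
  have inv: "invertible G"
    using assms matrix_left_right_inverse unfolding invertible_def by blast
  have "matrix_inv G = (matrix_inv G ** G) ** X"
    using assms by (simp flip: matrix_mul_assoc)
  then show ?thesis using matrix_inv_left[OF inv] by simp
qed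

lemma posdef_invertible:
  fixes G :: "real^'n::finite^'n"
  assumes G: "posdef G"
  shows "invertible G"
proof -
  have "inj ((*v) G)"
  proof (rule injI)
    fix x y assume "G *v x = G *v y"
    then have "G *v (x - y) = 0" by (simp add: matrix_vector_mult_diff_distrib)
    then have "bform G (x - y) (x - y) = 0" unfolding bform_def by simp
    then show "x = y" using posdef_bform_eq_0_iff[OF G] by (metis eq_iff_diff_eq_0)
  qed
  then show ?thesis
    using matrix_left_invertible_injective matrix_left_right_inverse unfolding invertible_def by metis
qed

lemma posdef_matrix_inv_symmetric:
  fixes G :: "real^'n::finite^'n"
  assumes G: "posdef G"
  shows "transpose (matrix_inv G) = matrix_inv G"
proof -
  have "G ** transpose (matrix_inv G) = transpose (matrix_inv G ** G)"
    using G by (simp add: matrix_transpose_mul posdef_def)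
  then have "G ** transpose (matrix_inv G) = mat 1"
    using matrix_inv_left[OF posdef_invertible[OF G]] by simp
  then show ?thesis by (metis matrix_inv_unique)
qed

lemma transpose_mult_mult_entry:
  fixes P X :: "real^'n::finite^'n"
  shows "(transpose P ** X ** P) $ i $ j = bform X (column i P) (column j P)"
proof -
  have "(transpose P ** X ** P) $ i $ j = (\<Sum>k\<in>UNIV. \<Sum>l\<in>UNIV. P$l$i * X$l$k * P$k$j)"
    by (simp add: matrix_matrix_mult_def transpose_def sum_distrib_right)
  also have "\<dots> = (\<Sum>l\<in>UNIV. \<Sum>k\<in>UNIV. P$l$i * X$l$k * P$k$j)" by (rule sum.swap)
  finally show ?thesis
    by (simp add: bform_def inner_vec_def column_def matrix_vector_mult_def sum_distrib_left mult.assoc)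
qed

lemma bform_matrix_vector_mult:
  "bform X (P *v z) (P *v z) = bform (transpose P ** X ** P) z (z::real^'n::finite)"
  unfolding bform_def
  by (metis dot_lmul_matrix matrix_vector_mul_assoc vector_transpose_matrix)

lemma bform_diag_matrix: "bform (diag_matrix \<mu>) z z = (\<Sum>i\<in>UNIV. \<mu> $ i * (z $ i)\<^sup>2)"
proof -
  have "(diag_matrix \<mu> *v z) $ i = \<mu> $ i * z $ i" for i
  proof -
    have "(diag_matrix \<mu> *v z) $ i = (\<Sum>j\<in>UNIV. (if i = j then \<mu> $ i else 0) * z $ j)"
      by (simp add: diag_matrix_def matrix_vector_mult_def)
    also have "\<dots> = (\<Sum>j\<in>UNIV. if i = j then \<mu> $ i * z $ j else 0)"
      by (rule sum.cong) auto
    finally show ?thesis by simp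
  qed
  then show ?thesis by (simp add: bform_def inner_vec_def power2_eq_square mult_ac)
qed

lemma bform_mat_1: "bform (mat 1) z z = (\<Sum>i\<in>UNIV. (z $ i)\<^sup>2)"
  by (simp add: bform_def inner_vec_def power2_eq_square)

lemma pairwise_orthonormal_independent:
  assumes G: "posdef G" and norm: "\<forall>b\<in>B. bform G b b = 1"
    and orth: "pairwise (\<lambda>b c. bform G b c = 0) B"
  shows "independent B"
proof -
  have "b \<notin> span (B - {b})" if b: "b \<in> B" for b
  proof
    have "span (B - {b}) \<subseteq> {x. bform G x b = 0}"
      using orth b by (intro span_minimal) (auto simp: subspace_def pairwise_def)
    moreover assume "b \<in> span (B - {b})"
    ultimately show False using norm b by auto
  qed
  then show ?thesis unfolding dependent_def by blast
qed

lemma posdef_simultaneous_diagonalization: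
  fixes G A :: "real^'n::finite^'n"
  assumes G: "posdef G" and A: "transpose A = A"
  obtains P :: "real^'n^'n" and \<mu> where "transpose P ** G ** P = mat 1" "transpose P ** A ** P = diag_matrix \<mu>"
proof -
  obtain B where B: "span B = UNIV" "pairwise (\<lambda>b c. bform G b c = 0) B"
      "\<forall>b\<in>B. bform G b b = 1" "\<forall>b\<in>B. \<exists>\<mu>. \<forall>y. bform A y b = \<mu> * bform G y b"
    using pencil_eigenbasis_exists[OF G A subspace_UNIV] by (auto simp: pencil_eigenbasis_def)
  have ind: "independent B" using pairwise_orthonormal_independent[OF G B(3,2)] .
  then have "finite B" "card B = CARD('n)"
    using B(1) dim_span_eq_card_independent[OF ind] by (auto simp: finiteI_independent)
  then obtain f where f: "bij_betw f (UNIV::'n set) B"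
    using finite_same_card_bij[of "UNIV::'n set" B] by auto
  obtain mu where mu: "\<forall>b\<in>B. \<forall>y. bform A y b = mu b * bform G y b" using B(4) by metis
  define P where "P = (\<chi> a j. f j $ a)"
  have colP: "column j P = f j" for j by (simp add: P_def column_def vec_eq_iff)
  have fB: "f j \<in> B" for j using f by (auto simp: bij_betw_def)
  have delta: "bform G (f i) (f j) = (if i = j then 1 else 0)" for i j
  proof (cases "i = j")
    case False
    then have "f i \<noteq> f j" using f by (auto simp: bij_betw_def inj_on_def)
    then show ?thesis using B(2) fB False by (simp add: pairwise_def)
  qed (use B(3) fB in simp)
  have "transpose P ** G ** P = mat 1"
    by (simp add: vec_eq_iff transpose_mult_mult_entry colP delta mat_def)
  moreover have "transpose P ** A ** P = diag_matrix (\<chi> j. mu (f j))"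
    using mu fB by (simp add: vec_eq_iff transpose_mult_mult_entry colP delta diag_matrix_def)
  ultimately show ?thesis using that by blast
qed

lemma congruence_to_identity_inverse:
  fixes G P :: "real^'n::finite^'n"
  assumes "transpose P ** G ** P = mat 1"
  shows "P ** transpose P = matrix_inv G" and "surj ((*v) P)"
proof -
  have R: "P ** (transpose P ** G) = mat 1"
    using matrix_left_right_inverse assms by auto
  then have "G ** (P ** transpose P) = mat 1"
    using matrix_left_right_inverse by (metis matrix_mul_assoc)
  then show "P ** transpose P = matrix_inv G" by (metis matrix_inv_unique)
  show "surj ((*v) P)" using R matrix_right_invertible_surjective by blast
qed

lemma matrix_diff_ldistrib: "(A::real^'n::finite^'m) ** (B - C) = A ** B - A ** C"
  and matrix_diff_rdistrib: "((X::real^'n::finite^'m) - Y) ** (Z::real^'k::finite^'n) = X ** Z - Y ** Z"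
  by (simp_all add: matrix_matrix_mult_def vec_eq_iff sum_subtractf algebra_simps)

lemma congruence_diag_eigen_tuple:
  fixes G A P :: "real^'n::finite^'n"
  assumes G: "posdef G" and PG: "transpose P ** G ** P = mat 1"
    and PA: "transpose P ** A ** P = diag_matrix \<mu>"
  shows "eigen_tuple (matrix_inv G ** A) \<mu>"
  unfolding eigen_tuple_def
proof
  fix t :: real
  let ?M = "t *\<^sub>R mat 1 - matrix_inv G ** A"
  have GM: "G ** ?M = t *\<^sub>R G - A"
    by (simp add: matrix_diff_ldistrib matrix_scalar_ac matrix_mul_assoc
        matrix_inv_right[OF posdef_invertible[OF G]])
  have "transpose P ** G ** ?M ** P = transpose P ** (G ** ?M) ** P"
    by (simp add: matrix_mul_assoc)
  also have "\<dots> = t *\<^sub>R (transpose P ** G ** P) - transpose P ** A ** P"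
    unfolding GM by (simp add: matrix_diff_ldistrib matrix_diff_rdistrib matrix_scalar_ac scalar_matrix_assoc)
  finally have "transpose P ** G ** ?M ** P = t *\<^sub>R mat 1 - diag_matrix \<mu>"
    by (simp add: PG PA)
  moreover have "det (t *\<^sub>R mat 1 - diag_matrix \<mu>) = (\<Prod>i\<in>UNIV. t - \<mu> $ i)"
    by (subst det_diagonal) (auto simp: diag_matrix_def mat_def)
  ultimately have "det (transpose P) * det G * det ?M * det P = (\<Prod>i\<in>UNIV. t - \<mu> $ i)"
    by (metis det_mul)
  then have "det ?M * (det (transpose P) * det G * det P) = (\<Prod>i\<in>UNIV. t - \<mu> $ i)"
    by (simp add: mult_ac)
  moreover have "det (transpose P) * det G * det P = 1"
    using arg_cong[OF PG, of det] by (simp add: det_mul)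
  ultimately show "det ?M = (\<Prod>i\<in>UNIV. t - \<mu> $ i)" by simp
qed

section \<open>The closed cone\<close>

definition metric_trace :: "real^'n::finite^'n \<Rightarrow> real^'n^'n \<Rightarrow> real" where
  "metric_trace G X = (\<Sum>a\<in>UNIV. \<Sum>b\<in>UNIV. matrix_inv G $ a $ b * X $ a $ b)"

lemma metric_trace_add: "metric_trace G (X + Y) = metric_trace G X + metric_trace G Y"
  and metric_trace_diff: "metric_trace G (X - Y) = metric_trace G X - metric_trace G Y"
  and metric_trace_scaleR: "metric_trace G (c *\<^sub>R X) = c * metric_trace G X"
  by (simp_all add: metric_trace_def algebra_simps sum.distrib sum_subtractf sum_distrib_left)

lemma metric_trace_self:
  fixes G :: "real^'n::finite^'n"
  assumes G: "posdef G"
  shows "metric_trace G G = real CARD('n)"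
proof -
  have "metric_trace G G = (\<Sum>a\<in>UNIV. (matrix_inv G ** G) $ a $ a)"
    using G transpose_eq_imp_entry_sym[of G]
    by (simp add: metric_trace_def matrix_matrix_mult_def posdef_def)
  then show ?thesis using matrix_inv_left[OF posdef_invertible[OF G]] by (simp add: mat_def)
qed

lemma metric_trace_outer: "metric_trace G (\<chi> i j. w $ i * w $ j) = w \<bullet> (matrix_inv G *v w)"
  by (simp add: metric_trace_def inner_vec_def matrix_vector_mult_def sum_distrib_left mult_ac)

lemma bform_outer: "bform (\<chi> i j. w $ i * w $ j) x x = (w \<bullet> x)\<^sup>2"
  by (simp add: bform_def inner_vec_def matrix_vector_mult_def power2_eq_square sum_product
      sum_distrib_left mult_ac)

lemma metric_trace_congruence:
  fixes G P :: "real^'n::finite^'n"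
  assumes "transpose P ** G ** P = mat 1"
  shows "metric_trace G X = (\<Sum>i\<in>UNIV. (transpose P ** X ** P) $ i $ i)"
proof -
  have "(\<Sum>i\<in>UNIV. (transpose P ** X ** P) $ i $ i) = (\<Sum>i\<in>UNIV. \<Sum>l\<in>UNIV. \<Sum>k\<in>UNIV. P$l$i * X$l$k * P$k$i)"
    by (simp add: transpose_mult_mult_entry bform_def inner_vec_def column_def
        matrix_vector_mult_def sum_distrib_left mult.assoc)
  also have "\<dots> = (\<Sum>l\<in>UNIV. \<Sum>i\<in>UNIV. \<Sum>k\<in>UNIV. P$l$i * X$l$k * P$k$i)"
    by (rule sum.swap)
  also have "\<dots> = (\<Sum>l\<in>UNIV. \<Sum>k\<in>UNIV. \<Sum>i\<in>UNIV. P$l$i * X$l$k * P$k$i)"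
    by (rule sum.cong[OF refl], rule sum.swap)
  also have "\<dots> = (\<Sum>l\<in>UNIV. \<Sum>k\<in>UNIV. (P ** transpose P) $ l $ k * X $ l $ k)"
    by (simp add: matrix_matrix_mult_def transpose_def sum_distrib_left mult_ac)
  finally show ?thesis
    by (simp add: metric_trace_def congruence_to_identity_inverse(1)[OF assms])
qed

lemma inner_square_le_bform:
  fixes G :: "real^'n::finite^'n"
  assumes G: "posdef G"
  shows "(w \<bullet> x)\<^sup>2 \<le> (w \<bullet> (matrix_inv G *v w)) * bform G x x"
proof -
  obtain P :: "real^'n^'n" and \<mu> where PG: "transpose P ** G ** P = mat 1"
    using posdef_simultaneous_diagonalization[OF G, of G] G by (auto simp: posdef_def)
  obtain z where x: "x = P *v z"
    using congruence_to_identity_inverse(2)[OF PG] by (metis surjD)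
  let ?v = "transpose P *v w"
  have "w \<bullet> x = ?v \<bullet> z"
    unfolding x by (metis dot_lmul_matrix transpose_matrix_vector)
  moreover have "w \<bullet> (matrix_inv G *v w) = ?v \<bullet> ?v"
    unfolding congruence_to_identity_inverse(1)[OF PG, symmetric]
    by (metis dot_lmul_matrix matrix_vector_mul_assoc transpose_matrix_vector)
  moreover have "bform G x x = z \<bullet> z"
    unfolding x bform_matrix_vector_mult PG by (simp add: bform_def)
  ultimately show ?thesis by (simp add: Cauchy_Schwarz_ineq)
qed

lemma closure_Gamma_cone_iff:
  fixes lam :: "real^'n::finite"
  assumes d0: "0 \<le> \<delta>"
  shows "lam \<in> closure (Gamma_cone \<delta>) \<longleftrightarrow> (\<forall>i. 0 \<le> lam $ i + \<delta> * (\<Sum>j\<in>UNIV. lam $ j))"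
proof
  have "closed {lam::real^'n. 0 \<le> lam $ i + \<delta> * (\<Sum>j\<in>UNIV. lam $ j)}" for i
    by (intro closed_Collect_le continuous_intros)
  then have "closed {lam::real^'n. \<forall>i. 0 \<le> lam $ i + \<delta> * (\<Sum>j\<in>UNIV. lam $ j)}"
    by (simp add: Collect_all_eq closed_INT)
  moreover have "Gamma_cone \<delta> \<subseteq> {lam. \<forall>i. 0 \<le> lam $ i + \<delta> * (\<Sum>j\<in>UNIV. lam $ j)}"
  proof (intro subsetI CollectI allI)
    fix x i assume "x \<in> Gamma_cone \<delta>"
    then have "- \<delta> * (\<Sum>j\<in>UNIV. x $ j) < x $ i" by (simp add: Gamma_cone_def)
    then show "0 \<le> x $ i + \<delta> * (\<Sum>j\<in>UNIV. x $ j)" by simp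
  qed
  ultimately show "lam \<in> closure (Gamma_cone \<delta>) \<Longrightarrow> \<forall>i. 0 \<le> lam $ i + \<delta> * (\<Sum>j\<in>UNIV. lam $ j)"
    using closure_minimal by blast
next
  assume H: "\<forall>i. 0 \<le> lam $ i + \<delta> * (\<Sum>j\<in>UNIV. lam $ j)"
  define x where "x k = lam + inverse (real (Suc k)) *\<^sub>R 1" for k
  have "lam + t *\<^sub>R 1 \<in> Gamma_cone \<delta>" if t: "0 < t" for t
    unfolding Gamma_cone_def
  proof (intro CollectI allI)
    fix i
    have "0 \<le> \<delta> * (t * real CARD('n))" using d0 t by simp
    moreover have "(\<Sum>j\<in>UNIV. (lam + t *\<^sub>R 1) $ j) = (\<Sum>j\<in>UNIV. lam $ j) + t * real CARD('n)"
      by (simp add: sum.distrib)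
    ultimately show "- \<delta> * (\<Sum>j\<in>UNIV. (lam + t *\<^sub>R 1) $ j) < (lam + t *\<^sub>R 1) $ i"
      using H[rule_format, of i] t by (simp add: algebra_simps)
  qed
  then have "x k \<in> Gamma_cone \<delta>" for k by (simp add: x_def)
  moreover have "x \<longlonglongrightarrow> lam + 0 *\<^sub>R 1"
    unfolding x_def by (intro tendsto_intros LIMSEQ_inverse_real_of_nat)
  ultimately show "lam \<in> closure (Gamma_cone \<delta>)"
    unfolding closure_sequential by auto
qed

lemma coeff_prod_linear_factors:
  fixes a :: "'i \<Rightarrow> 'a::idom"
  assumes "finite S" "S \<noteq> {}"
  shows "coeff (\<Prod>i\<in>S. [:- a i, 1:]) (card S - 1) = - sum a S"
  using assms
proof (induction S rule: finite_ne_induct)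
  case (insert x S)
  let ?Q = "\<Prod>i\<in>S. [:- a i, 1:]"
  have "coeff ?Q (card S) = 1"
    using lead_coeff_prod[of "\<lambda>i. [:- a i, 1:]" S] degree_prod_eq_sum_degree[of S "\<lambda>i. [:- a i, 1:]"]
    by simp
  moreover obtain m where "card S = Suc m" using insert by (metis card_gt_0_iff gr0_implies_Suc)
  ultimately show ?case using insert by (simp add: algebra_simps)
qed simp

text \<open>The sum of an eigenvalue tuple is the negated second coefficient of the characteristic
  polynomial, hence does not depend on the tuple.\<close>

lemma eigen_tuple_sum_eq:
  fixes a b :: "real^'n::finite"
  assumes "eigen_tuple M a" "eigen_tuple M b"
  shows "(\<Sum>i\<in>UNIV. a $ i) = (\<Sum>i\<in>UNIV. b $ i)"
proof -
  have "poly (\<Prod>i\<in>UNIV. [:- a $ i, 1:]) = poly (\<Prod>i\<in>UNIV. [:- b $ i, 1:])"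
    using assms by (simp add: fun_eq_iff poly_prod eigen_tuple_def)
  then have "(\<Prod>i\<in>UNIV. [:- a $ i, 1:]) = (\<Prod>i\<in>UNIV. [:- b $ i, 1:])"
    by (simp add: poly_eq_poly_eq_iff)
  then show ?thesis
    using coeff_prod_linear_factors[of UNIV "\<lambda>i. a $ i"] coeff_prod_linear_factors[of UNIV "\<lambda>i. b $ i"]
    by simp
qed

lemma eigen_tuple_entry_mem:
  fixes a b :: "real^'n::finite"
  assumes "eigen_tuple M a" "eigen_tuple M b"
  shows "\<exists>i. b $ j = a $ i"
proof -
  have "(\<Prod>i\<in>UNIV. b $ j - a $ i) = (\<Prod>i\<in>UNIV. b $ j - b $ i)"
    using assms by (simp add: eigen_tuple_def)
  also have "\<dots> = 0" by (rule prod_zero) auto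
  finally show ?thesis by simp
qed

lemma in_Gamma_bar_iff_eigen_tuple:
  fixes \<mu> :: "real^'n::finite"
  assumes d0: "0 \<le> \<delta>" and eig: "eigen_tuple (matrix_inv G ** A) \<mu>"
  shows "in_Gamma_bar \<delta> G A \<longleftrightarrow> \<mu> \<in> closure (Gamma_cone \<delta>)"
proof
  assume "in_Gamma_bar \<delta> G A"
  then obtain lam where lam: "eigen_tuple (matrix_inv G ** A) lam" "lam \<in> closure (Gamma_cone \<delta>)"
    by (auto simp: in_Gamma_bar_def)
  have "0 \<le> \<mu> $ j + \<delta> * (\<Sum>i\<in>UNIV. \<mu> $ i)" for j
  proof -
    obtain i where "\<mu> $ j = lam $ i" using eigen_tuple_entry_mem[OF lam(1) eig] by blast
    moreover have "0 \<le> lam $ i + \<delta> * (\<Sum>i\<in>UNIV. lam $ i)"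
      using lam(2) closure_Gamma_cone_iff[OF d0] by blast
    ultimately show ?thesis using eigen_tuple_sum_eq[OF lam(1) eig] by simp
  qed
  then show "\<mu> \<in> closure (Gamma_cone \<delta>)" by (simp add: closure_Gamma_cone_iff[OF d0])
qed (use eig in \<open>auto simp: in_Gamma_bar_def\<close>)

text \<open>For symmetric \<open>A\<close> this replaces eigenvalues by a quadratic form: diagonalising \<open>A\<close> and \<open>G\<close>
  simultaneously turns the form into \<open>\<Sum>\<^sub>i (\<mu>\<^sub>i + \<delta> \<Sum>\<^sub>j \<mu>\<^sub>j) z\<^sub>i\<^sup>2\<close>.\<close>

lemma in_Gamma_bar_iff_bform:
  fixes G A :: "real^'n::finite^'n"
  assumes G: "posdef G" and A: "transpose A = A" and d0: "0 \<le> \<delta>"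
  shows "in_Gamma_bar \<delta> G A \<longleftrightarrow> (\<forall>x. 0 \<le> bform A x x + \<delta> * metric_trace G A * bform G x x)"
proof -
  obtain P :: "real^'n^'n" and \<mu> where PG: "transpose P ** G ** P = mat 1"
      and PA: "transpose P ** A ** P = diag_matrix \<mu>"
    using posdef_simultaneous_diagonalization[OF G A] .
  have eig: "eigen_tuple (matrix_inv G ** A) \<mu>" by (rule congruence_diag_eigen_tuple[OF G PG PA])
  have tr: "metric_trace G A = (\<Sum>i\<in>UNIV. \<mu> $ i)"
    by (simp add: metric_trace_congruence[OF PG] PA diag_matrix_def)
  have "in_Gamma_bar \<delta> G A \<longleftrightarrow> \<mu> \<in> closure (Gamma_cone \<delta>)"
    by (rule in_Gamma_bar_iff_eigen_tuple[OF d0 eig])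
  also have "\<dots> \<longleftrightarrow> (\<forall>x. 0 \<le> bform A x x + \<delta> * metric_trace G A * bform G x x)"
  proof
    assume "\<mu> \<in> closure (Gamma_cone \<delta>)"
    then have \<mu>: "0 \<le> \<mu> $ i + \<delta> * (\<Sum>j\<in>UNIV. \<mu> $ j)" for i by (simp add: closure_Gamma_cone_iff[OF d0])
    show "\<forall>x. 0 \<le> bform A x x + \<delta> * metric_trace G A * bform G x x"
    proof
      fix x
      obtain z where x: "x = P *v z" using congruence_to_identity_inverse(2)[OF PG] by (metis surjD)
      have "bform A x x + \<delta> * metric_trace G A * bform G x x
          = (\<Sum>i\<in>UNIV. (\<mu> $ i + \<delta> * (\<Sum>j\<in>UNIV. \<mu> $ j)) * (z $ i)\<^sup>2)"
        by (simp add: x bform_matrix_vector_mult PG PA bform_diag_matrix bform_mat_1 tr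
            sum_distrib_left sum.distrib algebra_simps)
      also have "\<dots> \<ge> 0" using \<mu> by (intro sum_nonneg mult_nonneg_nonneg) auto
      finally show "0 \<le> bform A x x + \<delta> * metric_trace G A * bform G x x" .
    qed
  next
    assume H: "\<forall>x. 0 \<le> bform A x x + \<delta> * metric_trace G A * bform G x x"
    have "0 \<le> \<mu> $ j + \<delta> * (\<Sum>i\<in>UNIV. \<mu> $ i)" for j
      using H[rule_format, of "column j P"] arg_cong[OF PA, of "\<lambda>M. M $ j $ j"]
        arg_cong[OF PG, of "\<lambda>M. M $ j $ j"]
      by (simp add: transpose_mult_mult_entry diag_matrix_def mat_def tr)
    then show "\<mu> \<in> closure (Gamma_cone \<delta>)" by (simp add: closure_Gamma_cone_iff[OF d0])
  qed
  finally show ?thesis .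
qed

text \<open>The two trace contributions of the rank-one and the multiple of \<open>G\<close> cancel exactly
  because of the choice of \<open>k\<close>; what remains is controlled by Cauchy--Schwarz.\<close>

lemma in_Gamma_bar_outer_shift:
  fixes G A :: "real^'n::finite^'n"
  assumes G: "posdef G" and A: "transpose A = A" and d0: "0 \<le> \<delta>" and c: "0 \<le> c"
    and k: "k * (2 * (1 + \<delta>)) = 1 + real CARD('n) * \<delta>"
    and hyp: "in_Gamma_bar \<delta> G A"
  shows "in_Gamma_bar \<delta> G
    (c *\<^sub>R (A - k *\<^sub>R (\<chi> i j. w $ i * w $ j) + ((w \<bullet> (matrix_inv G *v w)) / 2) *\<^sub>R G))"
    (is "in_Gamma_bar \<delta> G ?A'")
proof -
  define \<rho> where "\<rho> = w \<bullet> (matrix_inv G *v w)"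
  have Gs: "transpose G = G" using G by (simp add: posdef_def)
  have "?A' $ i $ j = ?A' $ j $ i" for i j
    using transpose_eq_imp_entry_sym[OF A, of i j] transpose_eq_imp_entry_sym[OF Gs, of i j]
    by (simp add: mult.commute[of "w $ i"])
  then have A': "transpose ?A' = ?A'" by (simp add: transpose_def vec_eq_iff)
  have tr: "metric_trace G ?A' = c * (metric_trace G A - k * \<rho> + \<rho> / 2 * real CARD('n))"
    by (simp add: metric_trace_add metric_trace_diff metric_trace_scaleR metric_trace_outer
        metric_trace_self[OF G] \<rho>_def)
  have "0 \<le> k * (2 * (1 + \<delta>))" using k d0 by simp
  then have k0: "0 \<le> k" using d0 by (simp add: zero_le_mult_iff)
  have "0 \<le> bform ?A' x x + \<delta> * metric_trace G ?A' * bform G x x" for x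
  proof -
    define a where "a = bform A x x + \<delta> * metric_trace G A * bform G x x"
    define b where "b = \<rho> * bform G x x - (w \<bullet> x)\<^sup>2"
    have "bform ?A' x x = c * (bform A x x - k * (w \<bullet> x)\<^sup>2 + \<rho> / 2 * bform G x x)"
      by (simp add: bform_outer \<rho>_def)
    then have "bform ?A' x x + \<delta> * metric_trace G ?A' * bform G x x - c * (a + k * b)
        = - (c * \<rho> * bform G x x / 2) * (k * (2 * (1 + \<delta>)) - (1 + real CARD('n) * \<delta>))"
      unfolding tr a_def b_def by (simp add: algebra_simps)
    also have "\<dots> = 0" by (simp only: k diff_self mult_zero_right)
    finally have "bform ?A' x x + \<delta> * metric_trace G ?A' * bform G x x = c * (a + k * b)"
      by simp
    moreover have "0 \<le> a" "0 \<le> b"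
      using hyp inner_square_le_bform[OF G, of w x]
      unfolding in_Gamma_bar_iff_bform[OF G A d0] a_def b_def \<rho>_def by auto
    ultimately show ?thesis using c k0 by simp
  qed
  then show ?thesis using in_Gamma_bar_iff_bform[OF G A' d0] by blast
qed

section \<open>Partial derivatives and Schwarz's theorem\<close>

lemma pd_eq_derivative: "(f has_derivative D) (at x) \<Longrightarrow> pd i f x = D (axis i 1)"
  unfolding pd_def using frechet_derivative_at by metis

lemma has_derivative_cong_open:
  assumes "open S" "x \<in> S" "\<And>y. y \<in> S \<Longrightarrow> f y = g y"
  shows "(f has_derivative D) (at x) \<longleftrightarrow> (g has_derivative D) (at x)"
  using has_derivative_transform_within_open[OF _ assms(1,2)] assms(3) by metis

lemma pd_cong_open:
  assumes "open S" "x \<in> S" "\<And>y. y \<in> S \<Longrightarrow> f y = g y"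
  shows "pd i f x = pd i g x"
  unfolding pd_def frechet_derivative_def using has_derivative_cong_open[OF assms] by simp

lemma differentiable_cong_open:
  assumes "open S" "x \<in> S" "\<And>y. y \<in> S \<Longrightarrow> f y = g y"
  shows "f differentiable (at x) \<longleftrightarrow> g differentiable (at x)"
  unfolding differentiable_def using has_derivative_cong_open[OF assms] by simp

lemma pd_const: "pd i (\<lambda>y. c) x = 0"
  by (simp add: pd_def)

lemma pd_mult: "f differentiable (at x) \<Longrightarrow> g differentiable (at x) \<Longrightarrow>
    pd i (\<lambda>y. f y * g y) x = f x * pd i g x + pd i f x * (g x :: real)"
  unfolding frechet_derivative_works
  by (rule trans[OF pd_eq_derivative[OF has_derivative_mult]]) (auto simp: pd_def)

lemma pd_cmult: "f differentiable (at x) \<Longrightarrow> pd i (\<lambda>y. c * f y) x = c * pd i f x"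
  using pd_mult[of "\<lambda>y. c" x f i] by (simp add: pd_const)

lemma pd_sum:
  assumes "\<And>k. k \<in> I \<Longrightarrow> f k differentiable (at x)"
  shows "pd i (\<lambda>y. \<Sum>k\<in>I. f k y) x = (\<Sum>k\<in>I. pd i (f k) x)"
proof -
  have "\<And>k. k \<in> I \<Longrightarrow> (f k has_derivative frechet_derivative (f k) (at x)) (at x)"
    using assms frechet_derivative_works by blast
  then have "((\<lambda>y. \<Sum>k\<in>I. f k y) has_derivative (\<lambda>h. \<Sum>k\<in>I. frechet_derivative (f k) (at x) h)) (at x)"
    by (rule has_derivative_sum)
  then show ?thesis unfolding pd_def by (simp add: pd_eq_derivative[unfolded pd_def])
qed

lemma differentiable_prod:
  fixes f :: "'i \<Rightarrow> 'a::real_normed_vector \<Rightarrow> real"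
  assumes "\<And>i. i \<in> I \<Longrightarrow> f i differentiable (at x)"
  shows "(\<lambda>y. \<Prod>i\<in>I. f i y) differentiable (at x)"
proof -
  obtain D where "\<And>i. i \<in> I \<Longrightarrow> (f i has_derivative D i) (at x)"
    using assms unfolding differentiable_def by metis
  then show ?thesis unfolding differentiable_def by (blast intro: has_derivative_prod)
qed

lemma has_real_derivative_along_line:
  fixes u :: "real^'n::finite \<Rightarrow> real"
  assumes "u differentiable (at (a + s *\<^sub>R v))"
  shows "((\<lambda>s. u (a + s *\<^sub>R v)) has_real_derivative frechet_derivative u (at (a + s *\<^sub>R v)) v) (at s)"
proof -
  let ?D = "frechet_derivative u (at (a + s *\<^sub>R v))"
  have D: "(u has_derivative ?D) (at (a + s *\<^sub>R v))" using assms frechet_derivative_works by blast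
  have "((\<lambda>s. a + s *\<^sub>R v) has_derivative (\<lambda>h. h *\<^sub>R v)) (at s)"
    by (auto intro!: derivative_eq_intros)
  from has_derivative_compose[OF this D]
  have "((\<lambda>s. u (a + s *\<^sub>R v)) has_derivative (\<lambda>h. h * ?D v)) (at s)"
    using linear_scale[OF has_derivative_linear[OF D]] by simp
  moreover have "(\<lambda>h. h * ?D v) = (*) (?D v)" by (simp add: fun_eq_iff mult.commute)
  ultimately show ?thesis unfolding has_field_derivative_def by simp
qed

definition second_diff :: "(real^'n::finite \<Rightarrow> real) \<Rightarrow> real^'n \<Rightarrow> 'n \<Rightarrow> 'n \<Rightarrow> real \<Rightarrow> real" where
  "second_diff u P i j t =
     u (P + t *\<^sub>R axis i 1 + t *\<^sub>R axis j 1) - u (P + t *\<^sub>R axis i 1) - u (P + t *\<^sub>R axis j 1) + u P"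

lemma second_diff_commute: "second_diff u P i j t = second_diff u P j i t"
  by (simp add: second_diff_def add_ac)

lemma second_diff_mvt:
  fixes u :: "real^'n::finite \<Rightarrow> real"
  assumes du: "\<And>x. x \<in> ball P e \<Longrightarrow> u differentiable (at x)" and t: "0 < t" "2 * t < e"
  obtains z where "0 < z" "z < t" "second_diff u P i j t - t\<^sup>2 * c
    = t * (pd i u (P + z *\<^sub>R axis i 1 + t *\<^sub>R axis j 1) - pd i u (P + z *\<^sub>R axis i 1) - t * c)"
proof -
  define ei :: "real^'n" where "ei = axis i 1"
  define ej :: "real^'n" where "ej = axis j 1"
  define \<psi> where "\<psi> s = u (P + t *\<^sub>R ej + s *\<^sub>R ei) - u (P + s *\<^sub>R ei) - s * t * c" for s
  define \<psi>' where "\<psi>' s = pd i u (P + s *\<^sub>R ei + t *\<^sub>R ej) - pd i u (P + s *\<^sub>R ei) - t * c" for s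
  have "DERIV \<psi> s :> \<psi>' s" if s: "0 \<le> s" "s \<le> t" for s
  proof -
    have ball: "P + v \<in> ball P e" if "norm v < e" for v using that by (simp add: dist_norm)
    have "norm (t *\<^sub>R ej + s *\<^sub>R ei) \<le> t + s"
      using norm_triangle_ineq[of "t *\<^sub>R ej" "s *\<^sub>R ei"] s t by (simp add: ei_def ej_def)
    then have "P + t *\<^sub>R ej + s *\<^sub>R ei \<in> ball P e" "P + s *\<^sub>R ei \<in> ball P e"
      using s t ball[of "t *\<^sub>R ej + s *\<^sub>R ei"] ball[of "s *\<^sub>R ei"] by (auto simp: ei_def add.assoc)
    then show ?thesis
      unfolding \<psi>_def \<psi>'_def
      using has_real_derivative_along_line[of u "P + t *\<^sub>R ej" s ei]
        has_real_derivative_along_line[of u P s ei] du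
      by (auto intro!: derivative_eq_intros simp: pd_def ei_def add_ac)
  qed
  then obtain z where "0 < z" "z < t" "\<psi> t - \<psi> 0 = (t - 0) * \<psi>' z"
    using MVT2[OF t(1)] by blast
  moreover have "\<psi> t - \<psi> 0 = second_diff u P i j t - t\<^sup>2 * c"
    by (simp add: \<psi>_def second_diff_def ei_def ej_def power2_eq_square add_ac)
  ultimately show ?thesis using that by (simp add: \<psi>'_def ei_def ej_def)
qed

lemma has_derivative_increment_estimate:
  fixes f :: "real^'n::finite \<Rightarrow> real"
  assumes f: "(f has_derivative D) (at P)" and \<epsilon>: "\<epsilon> > 0"
  obtains d where "d > 0" "\<And>y z. norm (y - P) < d \<Longrightarrow> norm (z - P) < d \<Longrightarrow>
    \<bar>f y - f z - D (y - z)\<bar> \<le> \<epsilon> * (norm (y - P) + norm (z - P))"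
proof -
  have "\<forall>e>0. \<exists>d>0. \<forall>y. norm (y - P) < d \<longrightarrow> norm (f y - f P - D (y - P)) \<le> e * norm (y - P)"
    using f unfolding has_derivative_at_alt by blast
  then obtain d where d: "d > 0"
    and approx: "\<And>y. norm (y - P) < d \<Longrightarrow> \<bar>f y - f P - D (y - P)\<bar> \<le> \<epsilon> * norm (y - P)"
    using \<epsilon> unfolding real_norm_def by blast
  have split: "f y - f z - D (y - z) = (f y - f P - D (y - P)) - (f z - f P - D (z - P))" for y z
    using linear_diff[OF has_derivative_linear[OF f], of "y - P" "z - P"] by simp
  have "\<bar>f y - f z - D (y - z)\<bar> \<le> \<epsilon> * (norm (y - P) + norm (z - P))"
    if "norm (y - P) < d" "norm (z - P) < d" for y z
  proof -
    have "\<bar>f y - f z - D (y - z)\<bar> \<le> \<bar>f y - f P - D (y - P)\<bar> + \<bar>f z - f P - D (z - P)\<bar>"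
      unfolding split[of y z] by (rule abs_triangle_ineq4)
    also have "\<dots> \<le> \<epsilon> * norm (y - P) + \<epsilon> * norm (z - P)"
      using approx[OF that(1)] approx[OF that(2)] by (rule add_mono)
    finally show ?thesis by (simp add: distrib_left)
  qed
  with d that show ?thesis by blast
qed

lemma second_diff_approx:
  fixes u :: "real^'n::finite \<Rightarrow> real"
  assumes e: "e > 0" and du: "\<And>x. x \<in> ball P e \<Longrightarrow> u differentiable (at x)"
    and dd: "pd i u differentiable (at P)" and \<epsilon>: "\<epsilon> > 0"
  shows "\<exists>d>0. \<forall>t. 0 < t \<and> t < d \<longrightarrow> \<bar>second_diff u P i j t - t\<^sup>2 * pd j (pd i u) P\<bar> \<le> \<epsilon> * t\<^sup>2"
proof -
  define ei :: "real^'n" where "ei = axis i 1"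
  define ej :: "real^'n" where "ej = axis j 1"
  define D where "D = frechet_derivative (pd i u) (at P)"
  have hD: "(pd i u has_derivative D) (at P)" using dd frechet_derivative_works D_def by blast
  obtain d1 where d1: "d1 > 0" and approx: "\<And>y z. norm (y - P) < d1 \<Longrightarrow> norm (z - P) < d1 \<Longrightarrow>
      \<bar>pd i u y - pd i u z - D (y - z)\<bar> \<le> \<epsilon>/3 * (norm (y - P) + norm (z - P))"
    using has_derivative_increment_estimate[OF hD, of "\<epsilon>/3"] \<epsilon> by auto
  have "\<bar>second_diff u P i j t - t\<^sup>2 * D ej\<bar> \<le> \<epsilon> * t\<^sup>2" if t: "0 < t" "3 * t < min e d1" for t
  proof -
    obtain z where z: "0 < z" "z < t" and eq: "second_diff u P i j t - t\<^sup>2 * D ej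
        = t * (pd i u (P + z *\<^sub>R ei + t *\<^sub>R ej) - pd i u (P + z *\<^sub>R ei) - t * D ej)"
      using second_diff_mvt[where u=u and P=P and e=e and t=t and i=i and j=j and c="D ej"] du t
      unfolding ei_def ej_def by auto
    define y1 where "y1 = P + z *\<^sub>R ei + t *\<^sub>R ej"
    define y2 where "y2 = P + z *\<^sub>R ei"
    have n1: "norm (y1 - P) \<le> 2 * t"
      using norm_triangle_ineq[of "z *\<^sub>R ei" "t *\<^sub>R ej"] z by (simp add: y1_def ei_def ej_def)
    have n2: "norm (y2 - P) \<le> t" using z by (simp add: y2_def ei_def)
    have "D (y1 - y2) = t * D ej"
      using linear_scale[OF has_derivative_linear[OF hD]] by (simp add: y1_def y2_def)
    then have "\<bar>pd i u y1 - pd i u y2 - t * D ej\<bar> \<le> \<epsilon>/3 * (norm (y1 - P) + norm (y2 - P))"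
      using approx[of y1 y2] n1 n2 t by simp
    also have "\<dots> \<le> \<epsilon>/3 * (2 * t + t)" using n1 n2 \<epsilon> by (intro mult_left_mono) auto
    finally have "t * \<bar>pd i u y1 - pd i u y2 - t * D ej\<bar> \<le> t * (\<epsilon> * t)"
      using t by (intro mult_left_mono) auto
    moreover have "\<bar>second_diff u P i j t - t\<^sup>2 * D ej\<bar> = t * \<bar>pd i u y1 - pd i u y2 - t * D ej\<bar>"
      unfolding eq using t by (simp add: abs_mult y1_def y2_def)
    ultimately show ?thesis by (simp add: power2_eq_square mult_ac)
  qed
  moreover have "D ej = pd j (pd i u) P" by (simp add: D_def ej_def pd_def)
  ultimately show ?thesis
    using e d1 by (intro exI[of _ "min e d1 / 3"]) auto
qed

text \<open>Young's form of Schwarz's theorem: only the first partials near \<open>P\<close> and their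
  differentiability at \<open>P\<close> are needed.\<close>

lemma pd_commute:
  fixes u :: "real^'n::finite \<Rightarrow> real"
  assumes e: "e > 0" and du: "\<And>x. x \<in> ball P e \<Longrightarrow> u differentiable (at x)"
    and ddi: "pd i u differentiable (at P)" and ddj: "pd j u differentiable (at P)"
  shows "pd j (pd i u) P = pd i (pd j u) P"
proof -
  define a where "a = pd j (pd i u) P"
  define b where "b = pd i (pd j u) P"
  have "\<bar>a - b\<bar> \<le> 0 + \<epsilon>" if \<epsilon>: "\<epsilon> > 0" for \<epsilon>
  proof -
    obtain d1 where d1: "d1 > 0" "\<And>t. 0 < t \<Longrightarrow> t < d1 \<Longrightarrow> \<bar>second_diff u P i j t - t\<^sup>2 * a\<bar> \<le> \<epsilon>/2 * t\<^sup>2"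
      using second_diff_approx[OF e du ddi, of "\<epsilon>/2" j] \<epsilon> unfolding a_def by auto
    obtain d2 where d2: "d2 > 0" "\<And>t. 0 < t \<Longrightarrow> t < d2 \<Longrightarrow> \<bar>second_diff u P i j t - t\<^sup>2 * b\<bar> \<le> \<epsilon>/2 * t\<^sup>2"
      using second_diff_approx[OF e du ddj, of "\<epsilon>/2" i] \<epsilon> unfolding b_def second_diff_commute[of u P j i]
      by auto
    define t where "t = min d1 d2 / 2"
    have t: "0 < t" "t < d1" "t < d2" using d1 d2 by (auto simp: t_def)
    have "t\<^sup>2 * \<bar>a - b\<bar> = \<bar>t\<^sup>2 * (a - b)\<bar>" by (simp add: abs_mult)
    also have "\<dots> = \<bar>(second_diff u P i j t - t\<^sup>2 * b) - (second_diff u P i j t - t\<^sup>2 * a)\<bar>"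
      by (rule arg_cong[where f = abs]) (simp add: algebra_simps)
    also have "\<dots> \<le> \<bar>second_diff u P i j t - t\<^sup>2 * b\<bar> + \<bar>second_diff u P i j t - t\<^sup>2 * a\<bar>"
      by (rule abs_triangle_ineq4)
    also have "\<dots> \<le> \<epsilon>/2 * t\<^sup>2 + \<epsilon>/2 * t\<^sup>2"
      using d1(2)[OF t(1,2)] d2(2)[OF t(1,3)] by (rule add_mono[rotated])
    also have "\<dots> = t\<^sup>2 * \<epsilon>" by simp
    finally show ?thesis using t by simp
  qed
  then have "\<bar>a - b\<bar> \<le> 0" by (rule field_le_epsilon)
  then show ?thesis by (simp add: a_def b_def)
qed

section \<open>Coordinate Riemannian geometry\<close>

lemma det_differentiable:
  fixes F :: "real^'n::finite \<Rightarrow> real^'m::finite^'m"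
  assumes "\<And>a b. (\<lambda>y. F y $ a $ b) differentiable (at x)"
  shows "(\<lambda>y. det (F y)) differentiable (at x)"
  unfolding det_def
  by (intro differentiable_sum ballI differentiable_mult differentiable_const differentiable_prod assms)
     simp

lemma matrix_inv_entry_cramer:
  fixes M :: "real^'n::finite^'n"
  assumes "det M \<noteq> 0"
  shows "matrix_inv M $ a $ b = det (\<chi> r c. if c = a then (if r = b then 1 else 0) else M $ r $ c) / det M"
proof -
  let ?x = "matrix_inv M *v axis b 1"
  have "M *v ?x = axis b 1"
    using assms by (simp add: matrix_vector_mul_assoc matrix_inv_right invertible_det_nz)
  then have "?x $ a = det (\<chi> i j. if j = a then (axis b 1 :: real^'n) $ i else M $ i $ j) / det M"
    using cramer[OF assms] by simp
  moreover have "?x $ a = matrix_inv M $ a $ b"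
    by (simp add: matrix_vector_mult_def axis_def if_distrib[of "(*) _"] cong: if_cong)
  moreover have "(\<chi> i j. if j = a then (axis b 1 :: real^'n) $ i else M $ i $ j)
      = (\<chi> r c. if c = a then (if r = b then 1 else 0) else M $ r $ c)"
    by (simp add: axis_def vec_eq_iff)
  ultimately show ?thesis by simp
qed

lemma riemannian_metric_onD:
  assumes "riemannian_metric_on g U"
  shows "open U"
    and "\<And>x. x \<in> U \<Longrightarrow> posdef (g x)"
    and "\<And>x a b. x \<in> U \<Longrightarrow> (\<lambda>y. g y $ a $ b) differentiable (at x)"
    and "\<And>x a b k. x \<in> U \<Longrightarrow> pd k (\<lambda>y. g y $ a $ b) differentiable (at x)"
    and "\<And>x a b. x \<in> U \<Longrightarrow> g x $ a $ b = g x $ b $ a"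
proof -
  have C2: "Ck_on (Suc (Suc 0)) (\<lambda>y. g y $ a $ b) U" for a b
    using assms by (simp add: riemannian_metric_on_def smooth_on_def del: Ck_on.simps)
  show "open U" using assms by (simp add: riemannian_metric_on_def)
  show "posdef (g x)" if "x \<in> U" for x
    using assms that by (simp add: riemannian_metric_on_def posdef_def)
  show "(\<lambda>y. g y $ a $ b) differentiable (at x)" if "x \<in> U" for x a b using C2 that by simp
  show "pd k (\<lambda>y. g y $ a $ b) differentiable (at x)" if "x \<in> U" for x a b k using C2 that by simp
  show "g x $ a $ b = g x $ b $ a" if "x \<in> U" for x a b
    using assms that transpose_eq_imp_entry_sym[of "g x"] by (simp add: riemannian_metric_on_def)
qed

lemma ginv_differentiable:
  assumes rm: "riemannian_metric_on g U" and x: "x \<in> U"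
  shows "(\<lambda>y. ginv g y a b) differentiable (at x)"
proof -
  note R = riemannian_metric_onD[OF rm]
  have det: "det (g y) \<noteq> 0" if "y \<in> U" for y
    using posdef_invertible[OF R(2)[OF that]] invertible_det_nz by blast
  define F where
    "F y = det (\<chi> r c. if c = a then (if r = b then 1 else 0) else g y $ r $ c) / det (g y)" for y
  have "(\<lambda>y. det (\<chi> r c. if c = a then (if r = b then 1 else 0) else g y $ r $ c)) differentiable (at x)"
  proof (rule det_differentiable)
    fix r c
    show "(\<lambda>y. (\<chi> r c. if c = a then (if r = b then 1 else 0) else g y $ r $ c) $ r $ c) differentiable (at x)"
      by (cases "c = a") (simp_all add: R(3)[OF x])
  qed
  moreover have "(\<lambda>y. det (g y)) differentiable (at x)"
    by (rule det_differentiable) (rule R(3)[OF x])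
  ultimately have "F differentiable (at x)"
    unfolding F_def using det[OF x] by (intro differentiable_divide)
  moreover have "F y = ginv g y a b" if "y \<in> U" for y
    using matrix_inv_entry_cramer[OF det[OF that]] by (simp add: F_def ginv_def)
  ultimately show ?thesis using differentiable_cong_open[OF R(1) x, of F "\<lambda>y. ginv g y a b"] by simp
qed

lemma ginv_sym:
  assumes "riemannian_metric_on g U" "x \<in> U"
  shows "ginv g x a b = ginv g x b a"
  using transpose_eq_imp_entry_sym[OF posdef_matrix_inv_symmetric[OF riemannian_metric_onD(2)[OF assms]]]
  by (simp add: ginv_def)

lemma ginv_mult_left:
  assumes "riemannian_metric_on g U" "x \<in> U"
  shows "(\<Sum>l\<in>UNIV. ginv g x a l * g x $ l $ b) = (if a = b then 1 else 0)"
  using arg_cong[OF matrix_inv_left[OF posdef_invertible[OF riemannian_metric_onD(2)[OF assms]]],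
      of "\<lambda>M. M $ a $ b"]
  by (simp add: matrix_matrix_mult_def ginv_def mat_def)

lemma ginv_mult_right:
  assumes "riemannian_metric_on g U" "x \<in> U"
  shows "(\<Sum>l\<in>UNIV. g x $ a $ l * ginv g x l b) = (if a = b then 1 else 0)"
  using arg_cong[OF matrix_inv_right[OF posdef_invertible[OF riemannian_metric_onD(2)[OF assms]]],
      of "\<lambda>M. M $ a $ b"]
  by (simp add: matrix_matrix_mult_def ginv_def mat_def)

text \<open>Differentiating \<open>g\<^sup>-\<^sup>1 g = 1\<close> gives \<open>\<partial>\<^sub>k g\<^sup>-\<^sup>1 = - g\<^sup>-\<^sup>1 (\<partial>\<^sub>k g) g\<^sup>-\<^sup>1\<close>.\<close>

lemma pd_ginv:
  assumes rm: "riemannian_metric_on g U" and x: "x \<in> U"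
  shows "pd k (\<lambda>y. ginv g y a c) x =
     - (\<Sum>l\<in>UNIV. \<Sum>b\<in>UNIV. ginv g x a l * pd k (\<lambda>y. g y $ l $ b) x * ginv g x b c)"
proof -
  note R = riemannian_metric_onD[OF rm]
  define D where "D l = pd k (\<lambda>y. ginv g y a l) x" for l
  have D: "(\<Sum>l\<in>UNIV. D l * g x $ l $ b) = - (\<Sum>l\<in>UNIV. ginv g x a l * pd k (\<lambda>y. g y $ l $ b) x)"
    for b
  proof -
    have "pd k (\<lambda>y. \<Sum>l\<in>UNIV. ginv g y a l * g y $ l $ b) x = pd k (\<lambda>y. if a = b then 1 else 0) x"
      by (rule pd_cong_open[OF R(1) x]) (simp add: ginv_mult_left[OF rm])
    moreover have "pd k (\<lambda>y. \<Sum>l\<in>UNIV. ginv g y a l * g y $ l $ b) x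
        = (\<Sum>l\<in>UNIV. ginv g x a l * pd k (\<lambda>y. g y $ l $ b) x + D l * g x $ l $ b)"
      using ginv_differentiable[OF rm x] R(3)[OF x]
      by (simp add: pd_sum pd_mult D_def)
    ultimately show ?thesis by (simp add: pd_const sum.distrib eq_neg_iff_add_eq_0 add.commute)
  qed
  have "D c = (\<Sum>l\<in>UNIV. D l * (\<Sum>b\<in>UNIV. g x $ l $ b * ginv g x b c))"
    by (simp add: ginv_mult_right[OF rm x] if_distrib[of "(*) _"] cong: if_cong)
  also have "\<dots> = (\<Sum>b\<in>UNIV. \<Sum>l\<in>UNIV. D l * g x $ l $ b * ginv g x b c)"
    by (subst sum.swap) (simp add: sum_distrib_left mult.assoc)
  also have "\<dots> = - (\<Sum>b\<in>UNIV. \<Sum>l\<in>UNIV. ginv g x a l * pd k (\<lambda>y. g y $ l $ b) x * ginv g x b c)"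
    by (simp add: D sum_distrib_right[symmetric] sum_negf)
  also have "\<dots> = - (\<Sum>l\<in>UNIV. \<Sum>b\<in>UNIV. ginv g x a l * pd k (\<lambda>y. g y $ l $ b) x * ginv g x b c)"
    by (subst sum.swap) (rule refl)
  finally show ?thesis by (simp add: D_def)
qed

lemma pd_metric_entry_sym:
  assumes rm: "riemannian_metric_on g U" and x: "x \<in> U"
  shows "pd k (\<lambda>y. g y $ a $ b) x = pd k (\<lambda>y. g y $ b $ a) x"
  by (rule pd_cong_open[OF riemannian_metric_onD(1)[OF rm] x]) (rule riemannian_metric_onD(5)[OF rm])

lemma christoffel_sym:
  assumes "riemannian_metric_on g U" "x \<in> U"
  shows "christoffel g k i j x = christoffel g k j i x"
  unfolding christoffel_def using pd_metric_entry_sym[OF assms] by (simp add: add.commute)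

lemma christoffel_differentiable:
  assumes rm: "riemannian_metric_on g U" and x: "x \<in> U"
  shows "christoffel g k i j differentiable (at x)"
proof -
  have "christoffel g k i j = (\<lambda>y. 1/2 * (\<Sum>l\<in>UNIV. ginv g y k l * (pd i (\<lambda>y. g y $ j $ l) y
      + pd j (\<lambda>y. g y $ i $ l) y - pd l (\<lambda>y. g y $ i $ j) y)))"
    by (simp add: fun_eq_iff christoffel_def)
  then show ?thesis
    by (simp add: ginv_differentiable[OF rm x] riemannian_metric_onD(4)[OF rm x])
qed

text \<open>The contracted Christoffel symbol \<open>\<Gamma>\<^sup>i\<^sub>i\<^sub>j = \<onehalf> g\<^sup>i\<^sup>l \<partial>\<^sub>j g\<^sub>i\<^sub>l\<close> is a gradient
  (of \<open>log \<surd>det g\<close>), which is why its derivative is symmetric.\<close>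

lemma christoffel_contracted:
  assumes rm: "riemannian_metric_on g U" and x: "x \<in> U"
  shows "(\<Sum>i\<in>UNIV. christoffel g i i j x)
    = 1/2 * (\<Sum>i\<in>UNIV. \<Sum>l\<in>UNIV. ginv g x i l * pd j (\<lambda>y. g y $ i $ l) x)"
proof -
  have swap: "(\<Sum>i\<in>UNIV. \<Sum>l\<in>UNIV. ginv g x i l * pd l (\<lambda>y. g y $ i $ j) x)
      = (\<Sum>i\<in>UNIV. \<Sum>l\<in>UNIV. ginv g x i l * pd i (\<lambda>y. g y $ j $ l) x)"
  proof (subst sum.swap, intro sum.cong refl)
    fix i l
    show "ginv g x l i * pd i (\<lambda>y. g y $ l $ j) x = ginv g x i l * pd i (\<lambda>y. g y $ j $ l) x"
      using ginv_sym[OF rm x, of l i] pd_metric_entry_sym[OF rm x, of i l j] by simp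
  qed
  have "christoffel g i i j x = 1/2 * ((\<Sum>l\<in>UNIV. ginv g x i l * pd i (\<lambda>y. g y $ j $ l) x)
      + (\<Sum>l\<in>UNIV. ginv g x i l * pd j (\<lambda>y. g y $ i $ l) x)
      - (\<Sum>l\<in>UNIV. ginv g x i l * pd l (\<lambda>y. g y $ i $ j) x))" for i
    by (simp add: christoffel_def ring_distribs sum.distrib sum_subtractf)
  then have "(\<Sum>i\<in>UNIV. christoffel g i i j x)
      = 1/2 * ((\<Sum>i\<in>UNIV. \<Sum>l\<in>UNIV. ginv g x i l * pd i (\<lambda>y. g y $ j $ l) x)
      + (\<Sum>i\<in>UNIV. \<Sum>l\<in>UNIV. ginv g x i l * pd j (\<lambda>y. g y $ i $ l) x)
      - (\<Sum>i\<in>UNIV. \<Sum>l\<in>UNIV. ginv g x i l * pd l (\<lambda>y. g y $ i $ j) x))"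
    by (simp only: sum_distrib_left[symmetric] sum.distrib sum_subtractf)
  then show ?thesis unfolding swap by simp
qed

lemma pd_christoffel_contracted:
  assumes rm: "riemannian_metric_on g U" and x: "x \<in> U"
  shows "(\<Sum>i\<in>UNIV. pd k (christoffel g i i j) x) = 1/2 * (\<Sum>i\<in>UNIV. \<Sum>l\<in>UNIV.
      ginv g x i l * pd k (pd j (\<lambda>y. g y $ i $ l)) x + pd k (\<lambda>y. ginv g y i l) x * pd j (\<lambda>y. g y $ i $ l) x)"
proof -
  note R = riemannian_metric_onD[OF rm]
  have dd: "(\<lambda>y. ginv g y i l * pd j (\<lambda>y. g y $ i $ l) y) differentiable (at x)" for i l
    by (intro differentiable_mult ginv_differentiable[OF rm x] R(4)[OF x])
  have "(\<Sum>i\<in>UNIV. pd k (christoffel g i i j) x) = pd k (\<lambda>y. \<Sum>i\<in>UNIV. christoffel g i i j y) x"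
    by (rule pd_sum[symmetric]) (rule christoffel_differentiable[OF rm x])
  also have "\<dots> = pd k (\<lambda>y. 1/2 * (\<Sum>i\<in>UNIV. \<Sum>l\<in>UNIV. ginv g y i l * pd j (\<lambda>y. g y $ i $ l) y)) x"
    by (rule pd_cong_open[OF R(1) x]) (rule christoffel_contracted[OF rm])
  also have "\<dots> = 1/2 * pd k (\<lambda>y. \<Sum>i\<in>UNIV. \<Sum>l\<in>UNIV. ginv g y i l * pd j (\<lambda>y. g y $ i $ l) y) x"
    using dd by (intro pd_cmult) simp
  also have "\<dots> = 1/2 * (\<Sum>i\<in>UNIV. \<Sum>l\<in>UNIV. pd k (\<lambda>y. ginv g y i l * pd j (\<lambda>y. g y $ i $ l) y) x)"
    using dd by (simp add: pd_sum)
  also have "\<dots> = 1/2 * (\<Sum>i\<in>UNIV. \<Sum>l\<in>UNIV. ginv g x i l * pd k (pd j (\<lambda>y. g y $ i $ l)) x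
      + pd k (\<lambda>y. ginv g y i l) x * pd j (\<lambda>y. g y $ i $ l) x)"
    by (simp add: pd_mult ginv_differentiable[OF rm x] R(4)[OF x])
  finally show ?thesis .
qed

lemma sum_reverse4:
  "(\<Sum>i\<in>A. \<Sum>l\<in>B. \<Sum>a\<in>C. \<Sum>b\<in>D. F i l a b) = (\<Sum>b\<in>D. \<Sum>a\<in>C. \<Sum>l\<in>B. \<Sum>i\<in>A. F i l a b)"
proof -
  have "(\<Sum>i\<in>A. \<Sum>l\<in>B. \<Sum>a\<in>C. \<Sum>b\<in>D. F i l a b) = (\<Sum>l\<in>B. \<Sum>a\<in>C. \<Sum>b\<in>D. \<Sum>i\<in>A. F i l a b)"
    by (subst sum.swap) (simp only: sum.swap[of _ A])
  also have "\<dots> = (\<Sum>b\<in>D. \<Sum>a\<in>C. \<Sum>l\<in>B. \<Sum>i\<in>A. F i l a b)"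
    by (subst sum.swap) (simp only: sum.swap[of _ B])
  finally show ?thesis .
qed

lemma contraction_swap:
  fixes G Dk Dj :: "'n::finite \<Rightarrow> 'n \<Rightarrow> real"
  assumes "\<And>a b. Dk a b = Dk b a" and "\<And>a b. Dj a b = Dj b a"
  shows "(\<Sum>i\<in>UNIV. \<Sum>l\<in>UNIV. (\<Sum>a\<in>UNIV. \<Sum>b\<in>UNIV. G i a * Dk a b * G b l) * Dj i l)
       = (\<Sum>i\<in>UNIV. \<Sum>l\<in>UNIV. (\<Sum>a\<in>UNIV. \<Sum>b\<in>UNIV. G i a * Dj a b * G b l) * Dk i l)"
proof -
  have "(\<Sum>i\<in>UNIV. \<Sum>l\<in>UNIV. (\<Sum>a\<in>UNIV. \<Sum>b\<in>UNIV. G i a * Dk a b * G b l) * Dj i l)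
      = (\<Sum>i\<in>UNIV. \<Sum>l\<in>UNIV. \<Sum>a\<in>UNIV. \<Sum>b\<in>UNIV. G i a * Dj l i * G b l * Dk b a)"
    using assms by (simp add: sum_distrib_left sum_distrib_right mult_ac)
  also have "\<dots> = (\<Sum>b\<in>UNIV. \<Sum>a\<in>UNIV. \<Sum>l\<in>UNIV. \<Sum>i\<in>UNIV. G i a * Dj l i * G b l * Dk b a)"
    by (rule sum_reverse4)
  also have "\<dots> = (\<Sum>i\<in>UNIV. \<Sum>l\<in>UNIV. (\<Sum>a\<in>UNIV. \<Sum>b\<in>UNIV. G i a * Dj a b * G b l) * Dk i l)"
    by (simp add: sum_distrib_left sum_distrib_right mult_ac)
  finally show ?thesis .
qed

lemma pd_christoffel_contracted_commute:
  assumes rm: "riemannian_metric_on g U" and P: "P \<in> U"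
  shows "(\<Sum>i\<in>UNIV. pd k (christoffel g i i j) P) = (\<Sum>i\<in>UNIV. pd j (christoffel g i i k) P)"
proof -
  note R = riemannian_metric_onD[OF rm]
  define Gi where "Gi a b = ginv g P a b" for a b
  define Dk where "Dk a b = pd k (\<lambda>y. g y $ a $ b) P" for a b
  define Dj where "Dj a b = pd j (\<lambda>y. g y $ a $ b) P" for a b
  have sym: "Dk a b = Dk b a" "Dj a b = Dj b a" for a b
    unfolding Dk_def Dj_def using pd_metric_entry_sym[OF rm P] by blast+
  obtain e where e: "e > 0" "ball P e \<subseteq> U" using R(1) P open_contains_ball by blast
  have schwarz: "pd k (pd j (\<lambda>y. g y $ i $ l)) P = pd j (pd k (\<lambda>y. g y $ i $ l)) P" for i l
    by (rule pd_commute[OF e(1)]) (use e R(3) R(4)[OF P] in auto)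
  have pd_Gi: "pd m (\<lambda>y. ginv g y i l) P
      = - (\<Sum>a\<in>UNIV. \<Sum>b\<in>UNIV. Gi i a * pd m (\<lambda>y. g y $ a $ b) P * Gi b l)" for m i l
    unfolding Gi_def by (rule pd_ginv[OF rm P])
  have "(\<Sum>i\<in>UNIV. pd k (christoffel g i i j) P) = 1/2 * ((\<Sum>i\<in>UNIV. \<Sum>l\<in>UNIV. Gi i l * pd j (pd k (\<lambda>y. g y $ i $ l)) P)
      - (\<Sum>i\<in>UNIV. \<Sum>l\<in>UNIV. (\<Sum>a\<in>UNIV. \<Sum>b\<in>UNIV. Gi i a * Dk a b * Gi b l) * Dj i l))"
    unfolding pd_christoffel_contracted[OF rm P] pd_Gi
    by (simp add: schwarz Gi_def Dk_def Dj_def sum_subtractf)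
  also have "\<dots> = (\<Sum>i\<in>UNIV. pd j (christoffel g i i k) P)"
    unfolding pd_christoffel_contracted[OF rm P] pd_Gi contraction_swap[of Dk Dj, OF sym]
    by (simp add: Gi_def Dk_def Dj_def sum_subtractf)
  finally show ?thesis .
qed

lemma ricci_sym:
  assumes rm: "riemannian_metric_on g U" and P: "P \<in> U"
  shows "ricci g P $ j $ k = ricci g P $ k $ j"
proof -
  have split: "ricci g P $ j $ k = (\<Sum>i\<in>UNIV. pd i (christoffel g i j k) P)
      - (\<Sum>i\<in>UNIV. pd k (christoffel g i i j) P)
      + (\<Sum>i\<in>UNIV. \<Sum>p\<in>UNIV. christoffel g i i p P * christoffel g p j k P)
      - (\<Sum>i\<in>UNIV. \<Sum>p\<in>UNIV. christoffel g i k p P * christoffel g p i j P)" for j k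
    by (simp add: ricci_def sum.distrib sum_subtractf)
  have "(\<Sum>i\<in>UNIV. pd i (christoffel g i j k) P) = (\<Sum>i\<in>UNIV. pd i (christoffel g i k j) P)"
    using pd_cong_open[OF riemannian_metric_onD(1)[OF rm] P] christoffel_sym[OF rm] by metis
  moreover have "(\<Sum>i\<in>UNIV. \<Sum>p\<in>UNIV. christoffel g i i p P * christoffel g p j k P)
      = (\<Sum>i\<in>UNIV. \<Sum>p\<in>UNIV. christoffel g i i p P * christoffel g p k j P)"
    by (simp add: christoffel_sym[OF rm P, of _ j k])
  moreover have "(\<Sum>i\<in>UNIV. \<Sum>p\<in>UNIV. christoffel g i j p P * christoffel g p i k P)
      = (\<Sum>i\<in>UNIV. \<Sum>p\<in>UNIV. christoffel g i k p P * christoffel g p i j P)"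
    by (subst sum.swap) (simp add: christoffel_sym[OF rm P, of _ _ j] christoffel_sym[OF rm P, of _ _ k] mult.commute)
  ultimately show ?thesis
    unfolding split pd_christoffel_contracted_commute[OF rm P, of k j] by simp
qed

section \<open>The conformal factor \<open>exp (\<beta> u)\<close>\<close>

lemma has_derivative_exp_comp:
  fixes u :: "'a::real_normed_vector \<Rightarrow> real"
  assumes "(u has_derivative D) (at x)"
  shows "((\<lambda>y. exp (\<beta> * u y)) has_derivative (\<lambda>h. \<beta> * D h * exp (\<beta> * u x))) (at x)"
  using DERIV_compose_FDERIV[OF DERIV_exp has_derivative_mult_right[OF assms]] .

lemma differentiable_exp_comp:
  fixes u :: "'a::real_normed_vector \<Rightarrow> real"
  assumes "u differentiable (at x)"
  shows "(\<lambda>y. exp (\<beta> * u y)) differentiable (at x)"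
proof -
  obtain D where "(u has_derivative D) (at x)" using assms by (auto simp: differentiable_def)
  from has_derivative_exp_comp[OF this] show ?thesis by (auto simp: differentiable_def)
qed

lemma pd_exp_comp:
  "u differentiable (at x) \<Longrightarrow> pd k (\<lambda>y. exp (\<beta> * u y)) x = \<beta> * exp (\<beta> * u x) * pd k u x"
  unfolding frechet_derivative_works
  by (subst pd_eq_derivative[OF has_derivative_exp_comp]) (auto simp: pd_def)

lemma pd_pd_exp_comp:
  fixes u :: "real^'n::finite \<Rightarrow> real"
  assumes e: "e > 0" and du: "\<And>y. y \<in> ball x e \<Longrightarrow> u differentiable (at y)"
    and dd: "pd j u differentiable (at x)"
  shows "pd i (pd j (\<lambda>y. exp (\<beta> * u y))) x
    = \<beta> * exp (\<beta> * u x) * (pd i (pd j u) x + \<beta> * pd i u x * pd j u x)"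
proof -
  have ux: "u differentiable (at x)" using du e by simp
  have "pd i (pd j (\<lambda>y. exp (\<beta> * u y))) x = pd i (\<lambda>y. (\<beta> * exp (\<beta> * u y)) * pd j u y) x"
    by (rule pd_cong_open[of "ball x e"]) (auto simp: e pd_exp_comp[OF du])
  also have "\<dots> = \<beta> * exp (\<beta> * u x) * pd i (pd j u) x + pd i (\<lambda>y. \<beta> * exp (\<beta> * u y)) x * pd j u x"
    using differentiable_exp_comp[OF ux] dd by (simp add: pd_mult)
  also have "pd i (\<lambda>y. \<beta> * exp (\<beta> * u y)) x = \<beta> * (\<beta> * exp (\<beta> * u x) * pd i u x)"
    using differentiable_exp_comp[OF ux] by (simp add: pd_cmult pd_exp_comp[OF ux])
  finally show ?thesis by (simp add: algebra_simps)
qed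

lemma grad_sq_eq_inner: "grad_sq g u P = (\<chi> i. pd i u P) \<bullet> (matrix_inv (g P) *v (\<chi> i. pd i u P))"
  by (simp add: grad_sq_def ginv_def inner_vec_def matrix_vector_mult_def sum_distrib_left mult_ac)

lemma twice_diff_atD:
  assumes "twice_diff_at u P"
  obtains e where "e > 0" "\<And>x. x \<in> ball P e \<Longrightarrow> u differentiable (at x)"
    "\<And>i. pd i u differentiable (at P)"
  using assms by (auto simp: twice_diff_at_def)

lemma A_u_symmetric:
  assumes rm: "riemannian_metric_on g U" and P: "P \<in> U" and tw: "twice_diff_at u P"
  shows "transpose (A_u g u P) = A_u g u P"
proof -
  obtain e where e: "e > 0" "\<And>x. x \<in> ball P e \<Longrightarrow> u differentiable (at x)"
    and dd: "\<And>i. pd i u differentiable (at P)"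
    using twice_diff_atD[OF tw] by blast
  have "cov_hess g u P $ i $ j = cov_hess g u P $ j $ i" for i j
    using pd_commute[OF e dd dd] christoffel_sym[OF rm P] by (simp add: cov_hess_def)
  moreover have "schouten g P $ i $ j = schouten g P $ j $ i" for i j
    by (simp add: schouten_def ricci_sym[OF rm P, of i j] riemannian_metric_onD(5)[OF rm P, of i j])
  ultimately show ?thesis
    using riemannian_metric_onD(5)[OF rm P]
    by (simp add: transpose_def vec_eq_iff A_u_def du_du_def mult.commute)
qed

text \<open>With \<open>v = e\<^sup>\<beta>\<^sup>u\<close>: \<open>\<nabla>\<^sup>2v = \<beta> v (\<nabla>\<^sup>2u + \<beta> du \<otimes> du)\<close>; eliminating \<open>\<nabla>\<^sup>2u\<close> through the
  definition of \<open>A\<^sub>u\<close> leaves a rank-one term and a multiple of \<open>g\<close>.\<close>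

lemma cov_hess_exp_add_schouten:
  assumes tw: "twice_diff_at u P"
  shows "cov_hess g (\<lambda>x. exp (\<beta> * u x)) P + (\<beta> * exp (\<beta> * u P)) *\<^sub>R schouten g P
    = (\<beta> * exp (\<beta> * u P)) *\<^sub>R (A_u g u P - (1 - \<beta>) *\<^sub>R du_du u P + (grad_sq g u P / 2) *\<^sub>R g P)"
proof -
  obtain e where e: "e > 0" "\<And>x. x \<in> ball P e \<Longrightarrow> u differentiable (at x)"
    and dd: "\<And>i. pd i u differentiable (at P)"
    using twice_diff_atD[OF tw] by blast
  have ux: "u differentiable (at P)" using e by simp
  have "(\<Sum>k\<in>UNIV. christoffel g k i j P * (\<beta> * exp (\<beta> * u P) * pd k u P))
      = \<beta> * exp (\<beta> * u P) * (\<Sum>k\<in>UNIV. christoffel g k i j P * pd k u P)" for i j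
    by (simp add: sum_distrib_left mult_ac)
  moreover have "pd i (pd j (\<lambda>x. exp (\<beta> * u x))) P
      = \<beta> * exp (\<beta> * u P) * (pd i (pd j u) P + \<beta> * pd i u P * pd j u P)" for i j
    by (rule pd_pd_exp_comp[OF e dd])
  ultimately show ?thesis
    by (simp add: vec_eq_iff cov_hess_def A_u_def du_du_def pd_exp_comp[OF ux] algebra_simps)
qed

lemma conformal_exp_in_Gamma_bar:
  fixes u :: "real^'n::finite \<Rightarrow> real"
  assumes d0: "0 \<le> \<delta>" and b0: "0 \<le> \<beta>" and \<beta>: "(1 - \<beta>) * (2 * (1 + \<delta>)) = 1 + real CARD('n) * \<delta>"
    and rm: "riemannian_metric_on g U" and P: "P \<in> U" and tw: "twice_diff_at u P"
    and hyp: "in_Gamma_bar \<delta> (g P) (A_u g u P)"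
  shows "in_Gamma_bar \<delta> (g P) (cov_hess g (\<lambda>x. exp (\<beta> * u x)) P + (\<beta> * exp (\<beta> * u P)) *\<^sub>R schouten g P)"
  unfolding cov_hess_exp_add_schouten[OF tw]
  using in_Gamma_bar_outer_shift[OF riemannian_metric_onD(2)[OF rm P] A_u_symmetric[OF rm P tw] d0 _ \<beta> hyp,
      of "\<beta> * exp (\<beta> * u P)" "\<chi> i. pd i u P"] b0
  by (simp add: du_du_def grad_sq_eq_inner)

lemma Ck_on_const: "Ck_on k (\<lambda>y. c) U"
proof (induction k arbitrary: c)
  case (Suc k)
  then show ?case by (simp add: pd_const[abs_def])
qed simp

lemma riemannian_metric_on_flat: "open U \<Longrightarrow> riemannian_metric_on (\<lambda>_. mat 1) U"
  unfolding riemannian_metric_on_def smooth_on_def by (simp add: Ck_on_const)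

lemma christoffel_flat: "christoffel (\<lambda>_. mat 1) k i j x = 0"
  by (simp add: christoffel_def pd_const)

lemma schouten_flat: "schouten (\<lambda>_. mat 1) x = 0"
proof -
  have "ricci (\<lambda>_. mat 1) x = 0"
    by (simp add: ricci_def christoffel_flat[abs_def] pd_const vec_eq_iff)
  then show ?thesis by (simp add: schouten_def scalar_curv_def)
qed

lemma cov_hess_flat: "cov_hess (\<lambda>_. mat 1) f x = hessian f x"
  by (simp add: cov_hess_def hessian_def christoffel_flat)

lemma matrix_inv_mat_1: "matrix_inv (mat 1 :: real^'n::finite^'n) = mat 1"
  by (rule matrix_inv_unique) simp

lemma Ck_on_2_exp_comp:
  fixes u :: "real^'n::finite \<Rightarrow> real"
  assumes U: "open U" and u: "Ck_on 2 u U"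
  shows "Ck_on 2 (\<lambda>x. exp (\<beta> * u x)) U"
proof -
  have ud: "\<And>x. x \<in> U \<Longrightarrow> u differentiable (at x)"
    and pdd: "\<And>x i. x \<in> U \<Longrightarrow> pd i u differentiable (at x)"
    and pdc: "\<And>i j. continuous_on U (pd j (pd i u))"
    using u by (simp_all add: numeral_2_eq_2)
  have cont: "continuous_on U f" if "\<And>x. x \<in> U \<Longrightarrow> f differentiable (at x)" for f :: "real^'n \<Rightarrow> real"
    by (intro continuous_at_imp_continuous_on ballI differentiable_imp_continuous_within that)
  have "pd i (\<lambda>x. exp (\<beta> * u x)) differentiable (at x)" if x: "x \<in> U" for i x
  proof -
    have "(\<lambda>y. \<beta> * exp (\<beta> * u y) * pd i u y) differentiable (at x)"
      using differentiable_exp_comp[OF ud[OF x]] pdd[OF x] by simp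
    moreover have "pd i (\<lambda>x. exp (\<beta> * u x)) y = \<beta> * exp (\<beta> * u y) * pd i u y" if "y \<in> U" for y
      using pd_exp_comp[OF ud[OF that]] .
    ultimately show ?thesis using differentiable_cong_open[OF U x, of "pd i (\<lambda>x. exp (\<beta> * u x))"] by simp
  qed
  moreover have "continuous_on U (pd j (pd i (\<lambda>x. exp (\<beta> * u x))))" for i j
  proof -
    have "continuous_on U (\<lambda>y. \<beta> * exp (\<beta> * u y) * (pd j (pd i u) y + \<beta> * pd j u y * pd i u y))"
      by (intro continuous_intros cont ud pdd pdc)
    moreover have "pd j (pd i (\<lambda>x. exp (\<beta> * u x))) y
        = \<beta> * exp (\<beta> * u y) * (pd j (pd i u) y + \<beta> * pd j u y * pd i u y)" if y: "y \<in> U" for y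
    proof -
      obtain e where "e > 0" "ball y e \<subseteq> U" using U y open_contains_ball by blast
      then show ?thesis using ud pdd[OF y] by (intro pd_pd_exp_comp) auto
    qed
    ultimately show ?thesis by (simp add: continuous_on_eq)
  qed
  ultimately show ?thesis using differentiable_exp_comp[OF ud] by (simp add: numeral_2_eq_2)
qed

lemma delta_convex_exp_flat:
  fixes u :: "real^'n::finite \<Rightarrow> real"
  assumes d0: "0 \<le> \<delta>" and b0: "0 \<le> \<beta>" and \<beta>: "(1 - \<beta>) * (2 * (1 + \<delta>)) = 1 + real CARD('n) * \<delta>"
    and U: "open U" and u: "Ck_on 2 u U"
    and hyp: "\<forall>x\<in>U. in_Gamma_bar \<delta> (mat 1) (A_u (\<lambda>_. mat 1) u x)"
  shows "delta_convex \<delta> (\<lambda>x. exp (\<beta> * u x)) U"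
proof -
  have "twice_diff_at u x" if x: "x \<in> U" for x
  proof -
    obtain e where "e > 0" "ball x e \<subseteq> U" using U x open_contains_ball by blast
    then show ?thesis using u x by (auto simp: twice_diff_at_def numeral_2_eq_2)
  qed
  then have "in_Gamma_bar \<delta> (mat 1) (hessian (\<lambda>x. exp (\<beta> * u x)) x)" if "x \<in> U" for x
    using conformal_exp_in_Gamma_bar[OF d0 b0 \<beta> riemannian_metric_on_flat[OF U] that] hyp that
    by (simp add: schouten_flat cov_hess_flat)
  then show ?thesis
    using Ck_on_2_exp_comp[OF U u] by (simp add: delta_convex_def in_Gamma_bar_def matrix_inv_mat_1)
qed

theorem theorem3p1:
  fixes \<delta> :: real
  assumes n3: "CARD('n::finite) \<ge> 3"
    and d0: "0 \<le> \<delta>" and d1: "\<delta> < 1 / (real CARD('n) - 2)"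
  defines "\<beta> \<equiv> (1 + (2 - real CARD('n)) * \<delta>) / (2 * (1 + \<delta>))"
  shows "(\<forall>(U :: (real^'n) set) g (u :: real^'n \<Rightarrow> real) P.
            riemannian_metric_on g U \<and> P \<in> U \<and> twice_diff_at u P
            \<and> in_Gamma_bar \<delta> (g P) (A_u g u P)
            \<longrightarrow> in_Gamma_bar \<delta> (g P)
                  (cov_hess g (\<lambda>x. exp (\<beta> * u x)) P + (\<beta> * exp (\<beta> * u P)) *\<^sub>R schouten g P))
       \<and> (\<forall>(U :: (real^'n) set) (u :: real^'n \<Rightarrow> real).
            open U \<and> Ck_on 2 u U \<and> (\<forall>x\<in>U. in_Gamma_bar \<delta> (mat 1) (A_u (\<lambda>_. mat 1) u x))
            \<longrightarrow> delta_convex \<delta> (\<lambda>x. exp (\<beta> * u x)) U)"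
proof -
  have "(real CARD('n) - 2) * \<delta> < 1"
    using d1 n3 by (simp add: less_divide_eq mult.commute)
  then have b0: "0 \<le> \<beta>" unfolding \<beta>_def using d0 by (simp add: algebra_simps)
  have \<beta>: "(1 - \<beta>) * (2 * (1 + \<delta>)) = 1 + real CARD('n) * \<delta>"
    unfolding \<beta>_def using d0 by (simp add: field_simps)
  show ?thesis
    using conformal_exp_in_Gamma_bar[OF d0 b0 \<beta>] delta_convex_exp_flat[OF d0 b0 \<beta>] by blast
qed

end
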